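(* Let $\Gamma$ be a regular $N\times 2$ potential game. Define $F:\mathbb{R}^N\supset\Delta\to\mathbb{R}^N$ by $F(x)=\widehat{BR}^\lambda(x)-x$, the right-hand side of the smoothed best-response dynamics $\dot{x}=\widehat{BR}^\lambda(x)-x$. Then there exists $\lambda_0>0$ such that, for all $\lambda\in(0,\lambda_0)$: - every Nash distribution $x^\lambda\in\mathrm{ND}(\lambda)$ is hyperbolic, i.e. the Jacobian $DF(x^\lambda)$ is nonsingular; - a Nash distribution is linearly stable, i.e. all eigenvalues of $DF(x^\lambda)$ have negative real part, if and only if it is a pure-strategy Nash distribution.
   Context: An $N\times 2$ game has players $i=1,\dots,N$, each with action set $A_i=\{a_i^1,a_i^2\}$, and utilities $u_i:A_1\times\cdots\times A_N\to\mathbb{R}$. It is a potential game with potential $u:A_1\times\cdots\times A_N\to\mathbb{R}$ if $u(a_i,a_{-i})-u(a_i',a_{-i})=u_i(a_i,a_{-i})-u_i(a_i',a_{-i})$ for all $i$, all $a_i,a_i'\in A_i$ and all $a_{-i}$. A mixed strategy of player $i$ is a number $x_i\in[0,1]$, the probability of playing $a_i^1$. Joint mixed strategies form $\Delta=[0,1]^N$. The multilinear extension of the potential is $$U(x)=\sum_{k_1,\dots,k_N\in\{1,2\}} z_1^{k_1}(x_1)\cdots z_N^{k_N}(x_N)\,u(a_1^{k_1},\dots,a_N^{k_N}),$$ where $z_i^1(x_i)=x_i$ and $z_i^2(x_i)=1-x_i$. We write $U(a_i^k,x_{-i})$ for the value of $U$ when player $i$ plays $a_i^k$ with probability 1 and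 the others play $x_{-i}$. The set of Nash equilibria is $\mathrm{NE}=\{x\in\Delta: U(x_i,x_{-i})\ge U(x_i',x_{-i})\ \text{for all } i \text{ and all } x_i'\in[0,1]\}$. For $\lambda>0$, the logit (smoothed) best response is $$\widehat{BR}^\lambda_i(x)=\frac{\exp(U(a_i^1,x_{-i})/\lambda)}{\sum_{k=1,2}\exp(U(a_i^k,x_{-i})/\lambda)},\qquad \widehat{BR}^\lambda(x)=(\widehat{BR}^\lambda_1(x),\dots,\widehat{BR}^\lambda_N(x)).$$ The set of Nash distributions is $\mathrm{ND}(\lambda)=\{x\in\Delta: x=\widehat{BR}^\lambda(x)\}$. Regularity. Let $x^*\in\mathrm{NE}$, and relabel each player's two actions so that $x_i^*>0$ for all $i$; thus each player either mixes ($0<x_i^*<1$) or plays $a_i^1$ purely ($x_i^*=1$). - $x^*$ is quasi-strict if, for every $i$ with $x_i^*=1$, the action $a_i^2$ is not a best response to $x_{-i}^*$, i.e. $U(a_i^1,x^*_{-i})>U(a_i^2,x^*_{-i})$. - Let the mixing players be $i=1,\dots,\tilde N$ after reordering. The restricted Hessian relative to $x^*$ is the $\tilde N\times\tilde N$ matrix $H(x)=\big(\partial^2 U(x)/\partial x_i\partial x_j\big)_{i,j=1,\dots,\tilde N}$, which may be evaluated at any $x\in\Delta$. - $x^*$ is regular if it is quasi-strict and $H(x^* )$ is invertible. - The potential game is regular if every Nash equilibrium is regular. Fact used (valid in regular potential games): $\mathrm{NE}$ is finite, and there exists $\lambda_1>0$ such that, for each $x^*\in\mathrm{NE}$, there is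 a continuous branch $\lambda\mapsto x^\lambda(x^* )\in\mathrm{ND}(\lambda)$ on $(0,\lambda_1)$ with $x^\lambda(x^* )\to x^*$ as $\lambda\to0$. For each $\lambda\in(0,\lambda_1)$ these branches are pairwise distinct and exhaust $\mathrm{ND}(\lambda)$. A Nash distribution is called a pure-strategy Nash distribution if it lies on the branch of a pure-strategy Nash equilibrium $x^*\in\{0,1\}^N$, i.e. it converges to a pure Nash equilibrium as $\lambda\to0$. *)

theory Defs
  imports "HOL-Analysis.Analysis"
begin

text \<open>A pure profile is a map
  'n => bool, where True encodes action a_i^1 and False encodes a_i^2.
  A mixed profile is a vector x :: real^'n, x$i = probability of a_i^1.\<close>

definition potential_game ::
  "('n \<Rightarrow> ('n \<Rightarrow> bool) \<Rightarrow> real) \<Rightarrow> (('n \<Rightarrow> bool) \<Rightarrow> real) \<Rightarrow> bool" where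
  "potential_game util u \<longleftrightarrow>
     (\<forall>i s b b'. u (s(i := b)) - u (s(i := b')) = util i (s(i := b)) - util i (s(i := b')))"

definition simplex_prod :: "(real^'n) set" where
  "simplex_prod = {x. \<forall>i. 0 \<le> x$i \<and> x$i \<le> 1}"

definition zw :: "bool \<Rightarrow> real \<Rightarrow> real" where
  "zw b t = (if b then t else 1 - t)"

definition mlext :: "(('n::finite \<Rightarrow> bool) \<Rightarrow> real) \<Rightarrow> real^'n \<Rightarrow> real" where
  "mlext u x = (\<Sum>s\<in>UNIV. (\<Prod>i\<in>UNIV. zw (s i) (x$i)) * u s)"

definition upd :: "real^'n \<Rightarrow> 'n \<Rightarrow> real \<Rightarrow> real^'n" where
  "upd x i t = (\<chi> j. if j = i then t else x$j)"

text \<open>U(a_i^k, x_{-i}); b = True means a_i^1, b = False means a_i^2.\<close>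
definition Upure :: "(('n::finite \<Rightarrow> bool) \<Rightarrow> real) \<Rightarrow> 'n \<Rightarrow> bool \<Rightarrow> real^'n \<Rightarrow> real" where
  "Upure u i b x = mlext u (upd x i (if b then 1 else 0))"

definition NE :: "(('n::finite \<Rightarrow> bool) \<Rightarrow> real) \<Rightarrow> (real^'n) set" where
  "NE u = {x \<in> simplex_prod. \<forall>i. \<forall>t\<in>{0..1}. mlext u (upd x i t) \<le> mlext u x}"

definition logitBR :: "(('n::finite \<Rightarrow> bool) \<Rightarrow> real) \<Rightarrow> real \<Rightarrow> real^'n \<Rightarrow> real^'n" where
  "logitBR u lam x = (\<chi> i. exp (Upure u i True x / lam) /
       (exp (Upure u i True x / lam) + exp (Upure u i False x / lam)))"

definition ND :: "(('n::finite \<Rightarrow> bool) \<Rightarrow> real) \<Rightarrow> real \<Rightarrow> (real^'n) set" where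
  "ND u lam = {x \<in> simplex_prod. x = logitBR u lam x}"

definition sbr_field :: "(('n::finite \<Rightarrow> bool) \<Rightarrow> real) \<Rightarrow> real \<Rightarrow> real^'n \<Rightarrow> real^'n" where
  "sbr_field u lam x = logitBR u lam x - x"

definition partial :: "(real^'n \<Rightarrow> real) \<Rightarrow> 'n \<Rightarrow> real^'n \<Rightarrow> real" where
  "partial f i x = deriv (\<lambda>t. f (upd x i t)) (x$i)"

definition hess :: "(('n::finite \<Rightarrow> bool) \<Rightarrow> real) \<Rightarrow> real^'n \<Rightarrow> 'n \<Rightarrow> 'n \<Rightarrow> real" where
  "hess u x i j = partial (\<lambda>y. partial (mlext u) j y) i x"

definition mixing_players :: "real^'n \<Rightarrow> 'n set" where
  "mixing_players x = {i. 0 < x$i \<and> x$i < 1}"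

definition invertible_on :: "'n set \<Rightarrow> ('n \<Rightarrow> 'n \<Rightarrow> real) \<Rightarrow> bool" where
  "invertible_on M H \<longleftrightarrow> (\<exists>B. (\<forall>i\<in>M. \<forall>j\<in>M. (\<Sum>k\<in>M. H i k * B k j) = (if i = j then 1 else 0))
                            \<and> (\<forall>i\<in>M. \<forall>j\<in>M. (\<Sum>k\<in>M. B i k * H k j) = (if i = j then 1 else 0)))"

definition quasi_strict :: "(('n::finite \<Rightarrow> bool) \<Rightarrow> real) \<Rightarrow> real^'n \<Rightarrow> bool" where
  "quasi_strict u x \<longleftrightarrow>
     (\<forall>i. (x$i = 1 \<longrightarrow> Upure u i True x > Upure u i False x) \<and>
          (x$i = 0 \<longrightarrow> Upure u i False x > Upure u i True x))"

definition regular_NE :: "(('n::finite \<Rightarrow> bool) \<Rightarrow> real) \<Rightarrow> real^'n \<Rightarrow> bool" where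
  "regular_NE u x \<longleftrightarrow> x \<in> NE u \<and> quasi_strict u x \<and>
     invertible_on (mixing_players x) (hess u x)"

definition regular_game :: "(('n::finite \<Rightarrow> bool) \<Rightarrow> real) \<Rightarrow> bool" where
  "regular_game u \<longleftrightarrow> (\<forall>x\<in>NE u. regular_NE u x)"

definition complex_eigenvalue :: "real^'n^'n \<Rightarrow> complex \<Rightarrow> bool" where
  "complex_eigenvalue A mu \<longleftrightarrow>
     (\<exists>v :: complex^'n. v \<noteq> 0 \<and> (\<chi> i j. complex_of_real (A$i$j)) *v v = mu *s v)"

definition hyperbolic_pt :: "(real^'n \<Rightarrow> real^'n) \<Rightarrow> real^'n \<Rightarrow> bool" where
  "hyperbolic_pt F x \<longleftrightarrow> invertible (jacobian F (at x))"

definition linearly_stable :: "(real^'n \<Rightarrow> real^'n) \<Rightarrow> real^'n \<Rightarrow> bool" where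
  "linearly_stable F x \<longleftrightarrow> (\<forall>mu. complex_eigenvalue (jacobian F (at x)) mu \<longrightarrow> Re mu < 0)"

definition pure_profile :: "real^'n \<Rightarrow> bool" where
  "pure_profile x \<longleftrightarrow> (\<forall>i. x$i = 0 \<or> x$i = 1)"

definition pure_ND :: "(('n::finite \<Rightarrow> bool) \<Rightarrow> real) \<Rightarrow> real \<Rightarrow> real^'n \<Rightarrow> bool" where
  "pure_ND u lam x \<longleftrightarrow>
     (\<exists>y xs. continuous_on {0<..lam} y \<and> (\<forall>mu\<in>{0<..lam}. y mu \<in> ND u mu) \<and> y lam = x \<and>
            xs \<in> NE u \<and> pure_profile xs \<and> (y \<longlongrightarrow> xs) (at_right 0))"

end

theory Submission
  imports Defs
begin

text \<open>At a Nash distribution x the Jacobian of the smoothed best-response field is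
  diag p H - I, where H is the (symmetric, zero-diagonal) Hessian of the multilinear extension
  and p_i = x_i (1 - x_i) / lam. Its spectrum is governed by comparing the quadratic forms
  v' H v and sum_i v_i^2 / p_i. As lam tends to 0 every Nash distribution approaches an
  equilibrium. Near a pure regular equilibrium all gains are bounded away from 0, so the p_i are
  exponentially small, the second form dominates, and all eigenvalues have negative real part.
  Near a mixed regular equilibrium the weights of the mixing players are of order 1 / lam, so the
  invertible Hessian block dominates: this gives hyperbolicity, and a nonzero off-diagonal entry
  of H gives a direction with v' H v >= sum_i v_i^2 / p_i, hence an eigenvalue with nonnegative
  real part. Finally, the Nash distributions near a pure equilibrium are fixed points of uniform
  contractions, hence form a continuous branch, and along any branch stability is locally
  constant, so it is decided by the limit of the branch.\<close>

section \<open>The multilinear extension\<close>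

lemma upd_nth [simp]: "upd x i t $ j = (if j = i then t else x $ j)"
  by (simp add: upd_def)

lemma upd_upd_same [simp]: "upd (upd x i s) i t = upd x i t"
  by (simp add: vec_eq_iff)

lemma upd_upd_swap: "i \<noteq> j \<Longrightarrow> upd (upd x i s) j t = upd (upd x j t) i s"
  by (simp add: vec_eq_iff)

lemma upd_nth_self [simp]: "upd x i (x $ i) = x"
  by (simp add: vec_eq_iff)

lemma upd_in_simplex_prod:
  "x \<in> simplex_prod \<Longrightarrow> 0 \<le> t \<Longrightarrow> t \<le> 1 \<Longrightarrow> upd x i t \<in> simplex_prod"
  by (simp add: simplex_prod_def)

lemma mlext_upd:
  "mlext u (upd x i t) = (\<Sum>s\<in>UNIV. zw (s i) t * ((\<Prod>k\<in>UNIV-{i}. zw (s k) (x $ k)) * u s))"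
proof -
  have "(\<Prod>k\<in>UNIV. zw (s k) (upd x i t $ k)) = zw (s i) t * (\<Prod>k\<in>UNIV-{i}. zw (s k) (x $ k))" for s
    by (subst prod.remove[of _ i]) (auto intro!: prod.cong)
  then show ?thesis
    unfolding mlext_def by (simp add: mult.assoc)
qed

lemma mlext_upd_affine:
  "mlext u (upd x i t) = t * mlext u (upd x i 1) + (1 - t) * mlext u (upd x i 0)"
proof -
  define R where "R s = (\<Prod>k\<in>UNIV-{i}. zw (s k) (x $ k)) * u s" for s
  have "(\<Sum>s\<in>UNIV. zw (s i) t * R s)
      = (\<Sum>s\<in>UNIV. t * (zw (s i) 1 * R s) + (1 - t) * (zw (s i) 0 * R s))"
    by (intro sum.cong) (auto simp: zw_def algebra_simps)
  also have "\<dots> = t * (\<Sum>s\<in>UNIV. zw (s i) 1 * R s) + (1 - t) * (\<Sum>s\<in>UNIV. zw (s i) 0 * R s)"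
    by (simp add: sum.distrib sum_distrib_left)
  finally have "(\<Sum>s\<in>UNIV. zw (s i) t * R s)
      = t * (\<Sum>s\<in>UNIV. zw (s i) 1 * R s) + (1 - t) * (\<Sum>s\<in>UNIV. zw (s i) 0 * R s)" .
  then show ?thesis
    unfolding mlext_upd R_def .
qed

text \<open>gain u i x = U(a_i^1, x_{-i}) - U(a_i^2, x_{-i}) is the partial derivative of U in
  direction i, and interaction u i j x is the partial derivative of gain u j in direction i,
  which vanishes for i = j because U is affine in each coordinate.\<close>

definition gain :: "(('n::finite \<Rightarrow> bool) \<Rightarrow> real) \<Rightarrow> 'n \<Rightarrow> real^'n \<Rightarrow> real" where
  "gain u i x = mlext u (upd x i 1) - mlext u (upd x i 0)"

definition interaction :: "(('n::finite \<Rightarrow> bool) \<Rightarrow> real) \<Rightarrow> 'n \<Rightarrow> 'n \<Rightarrow> real^'n \<Rightarrow> real" where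
  "interaction u i j x = (if i = j then 0 else gain u j (upd x i 1) - gain u j (upd x i 0))"

lemma Upure_True_minus_False: "Upure u i True x - Upure u i False x = gain u i x"
  by (simp add: Upure_def gain_def)

lemma mlext_upd_eq: "mlext u (upd x i t) = mlext u (upd x i 0) + t * gain u i x"
  using mlext_upd_affine[of u x i t] by (simp add: gain_def algebra_simps)

lemma gain_upd_same [simp]: "gain u i (upd x i t) = gain u i x"
  by (simp add: gain_def)

lemma gain_upd_affine:
  "i \<noteq> j \<Longrightarrow> gain u j (upd x i t) = t * gain u j (upd x i 1) + (1 - t) * gain u j (upd x i 0)"
  unfolding gain_def
  using mlext_upd_affine[of u "upd x j 1" i t] mlext_upd_affine[of u "upd x j 0" i t]
  by (simp add: upd_upd_swap algebra_simps)

lemma interaction_sym: "interaction u i j x = interaction u j i x"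
  by (cases "i = j") (auto simp: interaction_def gain_def upd_upd_swap)

lemma interaction_same [simp]: "interaction u i i x = 0"
  by (simp add: interaction_def)

lemma abs_mlext_le:
  assumes "x \<in> simplex_prod"
  shows "\<bar>mlext u x\<bar> \<le> (\<Sum>s\<in>UNIV. \<bar>u s\<bar>)"
proof -
  have "\<bar>\<Prod>i\<in>UNIV. zw (s i) (x $ i)\<bar> \<le> 1" for s
    using assms by (auto simp: abs_prod simplex_prod_def zw_def intro!: prod_le_1)
  then have "\<bar>(\<Prod>i\<in>UNIV. zw (s i) (x $ i)) * u s\<bar> \<le> \<bar>u s\<bar>" for s
    by (simp add: abs_mult mult_left_le_one_le)
  then show ?thesis
    unfolding mlext_def by (rule order_trans[OF sum_abs sum_mono])
qed

lemma abs_gain_le: "x \<in> simplex_prod \<Longrightarrow> \<bar>gain u i x\<bar> \<le> 2 * (\<Sum>s\<in>UNIV. \<bar>u s\<bar>)"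
  using abs_mlext_le[of "upd x i 1" u] abs_mlext_le[of "upd x i 0" u]
  by (simp add: gain_def upd_in_simplex_prod)

lemma abs_interaction_le:
  "x \<in> simplex_prod \<Longrightarrow> \<bar>interaction u i j x\<bar> \<le> 4 * (\<Sum>s\<in>UNIV. \<bar>u s\<bar>)"
  using abs_gain_le[of "upd x i 1" u j] abs_gain_le[of "upd x i 0" u j]
  by (simp add: interaction_def upd_in_simplex_prod abs_triangle_ineq4[THEN order_trans])

lemma continuous_on_zw [continuous_intros]:
  "continuous_on S f \<Longrightarrow> continuous_on S (\<lambda>x. zw b (f x))"
  by (cases b) (auto simp: zw_def intro!: continuous_intros)

lemma continuous_on_upd [continuous_intros]:
  "continuous_on S f \<Longrightarrow> continuous_on S (\<lambda>x. upd (f x) i c)"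
  unfolding upd_def
  by (intro continuous_on_vec_lambda, rename_tac j, case_tac "j = i") (auto intro!: continuous_intros)

lemma continuous_on_mlext [continuous_intros]:
  "continuous_on S f \<Longrightarrow> continuous_on S (\<lambda>x. mlext u (f x))"
  unfolding mlext_def by (intro continuous_intros)

lemma continuous_on_gain [continuous_intros]:
  "continuous_on S f \<Longrightarrow> continuous_on S (\<lambda>x. gain u i (f x))"
  unfolding gain_def by (intro continuous_intros)

lemma continuous_on_interaction [continuous_intros]:
  "continuous_on S f \<Longrightarrow> continuous_on S (\<lambda>x. interaction u i j (f x))"
  unfolding interaction_def by (cases "i = j") (auto intro!: continuous_intros)

lemma has_derivative_zw_nth:
  "((\<lambda>y::real^'n. zw b (y $ k)) has_derivative (\<lambda>h. (zw b 1 - zw b 0) * h $ k)) F"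
  by (cases b) (auto simp: zw_def intro!: derivative_eq_intros bounded_linear_imp_has_derivative)

lemma mlext_has_derivative:
  "(mlext u has_derivative (\<lambda>h. \<Sum>j\<in>UNIV. gain u j x * h $ j)) (at x within S)"
proof -
  have "(mlext u has_derivative (\<lambda>h. \<Sum>s\<in>UNIV. (\<Sum>k\<in>UNIV. (zw (s k) 1 - zw (s k) 0) * h $ k *
            (\<Prod>j\<in>UNIV-{k}. zw (s j) (x $ j))) * u s)) (at x within S)"
    unfolding mlext_def
    by (intro derivative_eq_intros has_derivative_prod) (auto intro!: has_derivative_zw_nth)
  moreover have "(\<Sum>s\<in>UNIV. (\<Sum>k\<in>UNIV. (zw (s k) 1 - zw (s k) 0) * h $ k *
            (\<Prod>j\<in>UNIV-{k}. zw (s j) (x $ j))) * u s) = (\<Sum>j\<in>UNIV. gain u j x * h $ j)" for h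
    unfolding gain_def mlext_upd sum_distrib_right
    by (subst sum.swap) (simp add: sum_distrib_left sum_subtractf[symmetric] algebra_simps)
  ultimately show ?thesis
    by simp
qed

lemma upd_has_derivative:
  "((\<lambda>y. upd y i c) has_derivative (\<lambda>h. upd h i 0)) (F :: (real^'n::finite) filter)"
proof -
  have "linear (\<lambda>h::real^'n. upd h i 0)"
    by (rule linearI) (auto simp: vec_eq_iff)
  then have "((\<lambda>h::real^'n. upd h i 0) has_derivative (\<lambda>h. upd h i 0)) F"
    by (simp add: bounded_linear_imp_has_derivative linear_conv_bounded_linear)
  moreover have "(\<lambda>y. upd y i c) = (\<lambda>y. upd y i 0 + (\<chi> j. if j = i then c else 0))"
    by (auto simp: vec_eq_iff)
  ultimately show ?thesis
    using has_derivative_add[OF _ has_derivative_const] by fastforce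
qed

lemma mlext_upd_has_derivative:
  "((\<lambda>y. mlext u (upd y i c)) has_derivative
     (\<lambda>h. \<Sum>j\<in>UNIV. gain u j (upd x i c) * upd h i 0 $ j)) (at x within S)"
  using has_derivative_compose[OF upd_has_derivative mlext_has_derivative] by (simp add: o_def)

lemma gain_has_derivative:
  "(gain u i has_derivative (\<lambda>h. \<Sum>j\<in>UNIV. interaction u i j x * h $ j)) (at x within S)"
proof -
  have "(gain u i has_derivative (\<lambda>h. (\<Sum>j\<in>UNIV. gain u j (upd x i 1) * upd h i 0 $ j)
          - (\<Sum>j\<in>UNIV. gain u j (upd x i 0) * upd h i 0 $ j))) (at x within S)"
  proof -
    have "gain u i = (\<lambda>y. mlext u (upd y i 1) - mlext u (upd y i 0))"
      by (simp add: fun_eq_iff gain_def)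
    then show ?thesis
      by (simp only:) (intro has_derivative_diff mlext_upd_has_derivative)
  qed
  moreover have "(\<Sum>j\<in>UNIV. gain u j (upd x i 1) * upd h i 0 $ j)
      - (\<Sum>j\<in>UNIV. gain u j (upd x i 0) * upd h i 0 $ j) = (\<Sum>j\<in>UNIV. interaction u i j x * h $ j)" for h
    by (simp add: sum_subtractf[symmetric] interaction_def) (rule sum.cong, auto simp: algebra_simps)
  ultimately show ?thesis
    by simp
qed

lemma partial_mlext: "partial (mlext u) j y = gain u j y"
proof -
  have "((\<lambda>t. mlext u (upd y j t)) has_real_derivative gain u j y) (at t)" for t
  proof -
    have "(\<lambda>t. mlext u (upd y j t)) = (\<lambda>t. mlext u (upd y j 0) + t * gain u j y)"
      by (rule ext) (rule mlext_upd_eq)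
    then show ?thesis
      by (auto intro!: derivative_eq_intros)
  qed
  then show ?thesis
    unfolding partial_def by (rule DERIV_imp_deriv)
qed

lemma hess_eq_interaction: "hess u x i j = interaction u i j x"
proof -
  have "((\<lambda>t. gain u j (upd x i t)) has_real_derivative interaction u i j x) (at t)" for t
  proof (cases "i = j")
    case False
    have "(\<lambda>t. gain u j (upd x i t)) = (\<lambda>t. t * gain u j (upd x i 1) + (1 - t) * gain u j (upd x i 0))"
      by (rule ext) (rule gain_upd_affine[OF False])
    with False show ?thesis
      unfolding interaction_def by (auto intro!: derivative_eq_intros)
  qed (simp add: interaction_def)
  then show ?thesis
    unfolding hess_def partial_mlext[abs_def] partial_def by (rule DERIV_imp_deriv)
qed

section \<open>The logistic function\<close>

definition logistic :: "real \<Rightarrow> real" where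
  "logistic s = 1 / (1 + exp (- s))"

lemma one_plus_exp_pos: "0 < 1 + exp (s::real)"
  by (simp add: add_pos_pos)

lemma logistic_pos: "0 < logistic s"
  and logistic_less_one: "logistic s < 1"
  by (auto simp: logistic_def add_pos_pos)

lemma one_minus_logistic: "1 - logistic s = 1 / (1 + exp s)"
proof -
  have "exp (- s) * exp s = 1"
    by (simp add: exp_minus)
  then show ?thesis
    using one_plus_exp_pos[of s] one_plus_exp_pos[of "-s"] unfolding logistic_def
    by (simp add: field_simps)
qed

lemma logistic_minus: "logistic (- s) = 1 - logistic s"
  by (simp only: one_minus_logistic) (simp add: logistic_def)

lemma logistic_has_real_derivative:
  "(logistic has_real_derivative logistic s * (1 - logistic s)) (at s)"
proof -
  have pos: "1 + exp (- s) \<noteq> 0"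
    using one_plus_exp_pos[of "-s"] by linarith
  have "(logistic has_real_derivative exp (- s) / (1 + exp (- s))^2) (at s)"
    unfolding logistic_def[abs_def]
    by (rule derivative_eq_intros refl | simp add: pos)+ (simp add: power2_eq_square field_simps)
  moreover have "exp (- s) / (1 + exp (- s))^2 = logistic s * (1 - logistic s)"
    using pos unfolding logistic_def by (simp add: field_simps power2_eq_square)
  ultimately show ?thesis
    by simp
qed

lemma continuous_on_logistic [continuous_intros]:
  assumes "continuous_on S f"
  shows "continuous_on S (\<lambda>x. logistic (f x))"
proof -
  have "1 + exp (- f x) \<noteq> 0" for x
    using one_plus_exp_pos[of "- f x"] by linarith
  then show ?thesis
    unfolding logistic_def by (intro continuous_intros assms) auto
qed

lemma logistic_mono: "a \<le> b \<Longrightarrow> logistic a \<le> logistic b"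
  unfolding logistic_def by (intro divide_left_mono) (auto intro!: mult_pos_pos one_plus_exp_pos)

lemma logistic_times_one_minus_le: "logistic s * (1 - logistic s) \<le> exp (- \<bar>s\<bar>)"
proof -
  have "exp \<bar>s\<bar> \<le> (1 + exp (- s)) * (1 + exp s)"
    by (cases "s \<ge> 0") (auto simp: algebra_simps add_nonneg_nonneg)
  then have "1 / ((1 + exp (- s)) * (1 + exp s)) \<le> 1 / exp \<bar>s\<bar>"
    by (intro divide_left_mono) (auto intro!: mult_pos_pos one_plus_exp_pos)
  then show ?thesis
    unfolding one_minus_logistic by (simp add: logistic_def exp_minus field_simps)
qed

lemma one_minus_logistic_le_exp: "0 \<le> s \<Longrightarrow> 1 - logistic s \<le> exp (- s)"
  unfolding one_minus_logistic exp_minus inverse_eq_divide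
  by (intro divide_left_mono) (auto intro!: mult_pos_pos one_plus_exp_pos)

lemma logistic_le_exp: "s \<le> 0 \<Longrightarrow> logistic s \<le> exp s"
  using one_minus_logistic_le_exp[of "- s"] by (simp add: logistic_minus)

lemma one_minus_logistic_mult_le: "0 \<le> s \<Longrightarrow> (1 - logistic s) * s \<le> 1"
proof -
  assume "0 \<le> s"
  have "s \<le> 1 + exp s"
    using exp_ge_add_one_self[of s] by linarith
  then show ?thesis
    unfolding one_minus_logistic using one_plus_exp_pos[of s] by simp
qed

lemma square_div_four_le_exp: "0 \<le> t \<Longrightarrow> t^2 / 4 \<le> exp (t::real)"
proof -
  assume t: "0 \<le> t"
  have "(t/2)^2 \<le> (1 + t/2)^2"
    using t by (intro power_mono) auto
  also have "\<dots> \<le> (exp (t/2))^2"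
    using t by (intro power_mono exp_ge_add_one_self) auto
  also have "\<dots> = exp t"
    by (simp add: power2_eq_square exp_add[symmetric])
  finally show ?thesis
    by (simp add: power_divide)
qed

lemma exp_minus_le_inverse: "0 < t \<Longrightarrow> exp (- t) \<le> 1 / (t::real)"
proof -
  assume t: "0 < t"
  have "t \<le> exp t"
    using exp_ge_add_one_self[of t] by linarith
  then have "1 / exp t \<le> 1 / t"
    using t by (intro divide_left_mono) auto
  then show ?thesis
    by (simp add: exp_minus inverse_eq_divide)
qed

lemma exp_minus_le_four_div_square: "0 < t \<Longrightarrow> exp (- t) \<le> 4 / (t::real)^2"
proof -
  assume t: "0 < t"
  have "1 / exp t \<le> 1 / (t^2 / 4)"
    using square_div_four_le_exp[of t] t by (intro divide_left_mono) auto
  then show ?thesis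
    by (simp add: exp_minus inverse_eq_divide)
qed

lemma logistic_diff_le_nonneg:
  assumes "0 \<le> c" "c \<le> b" "b \<le> a"
  shows "logistic a - logistic b \<le> exp (- c) * (a - b)"
proof -
  have "exp a - exp b \<le> exp a * (a - b)"
    using exp_ge_add_one_self[of "b - a"] mult_left_mono[of "1 - exp (b - a)" "a - b" "exp a"]
    by (simp add: algebra_simps exp_diff)
  have "logistic a - logistic b = 1 / (1 + exp b) - 1 / (1 + exp a)"
    by (simp add: one_minus_logistic[symmetric])
  also have "\<dots> = (exp a - exp b) / ((1 + exp a) * (1 + exp b))"
    using one_plus_exp_pos[of a] one_plus_exp_pos[of b] by (simp add: field_simps)
  also have "\<dots> \<le> exp a * (a - b) / (exp a * exp b)"
  proof (rule frac_le)
    show "exp a * exp b \<le> (1 + exp a) * (1 + exp b)"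
      by (intro mult_mono) auto
  qed (use \<open>exp a - exp b \<le> exp a * (a - b)\<close> assms in auto)
  also have "\<dots> = exp (- b) * (a - b)"
    by (simp add: exp_minus field_simps)
  also have "\<dots> \<le> exp (- c) * (a - b)"
    using assms by (intro mult_right_mono) auto
  finally show ?thesis .
qed

lemma logistic_lipschitz_away_from_zero:
  assumes "0 \<le> c" and "(c \<le> a \<and> c \<le> b) \<or> (a \<le> - c \<and> b \<le> - c)"
  shows "\<bar>logistic a - logistic b\<bar> \<le> exp (- c) * \<bar>a - b\<bar>"
proof -
  have pos: "\<bar>logistic a - logistic b\<bar> \<le> exp (- c) * \<bar>a - b\<bar>" if "c \<le> a" "c \<le> b" for a b
  proof (cases "b \<le> a")
    case True
    then have "logistic b \<le> logistic a"
      by (rule logistic_mono)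
    with logistic_diff_le_nonneg[of c b a] True that assms(1) show ?thesis
      by simp
  next
    case False
    then have "logistic a \<le> logistic b"
      by (intro logistic_mono) simp
    with logistic_diff_le_nonneg[of c a b] False that assms(1) show ?thesis
      by simp
  qed
  from assms(2) show ?thesis
  proof
    assume "c \<le> a \<and> c \<le> b"
    then show ?thesis
      by (intro pos) auto
  next
    assume "a \<le> - c \<and> b \<le> - c"
    then have "\<bar>logistic (- b) - logistic (- a)\<bar> \<le> exp (- c) * \<bar>- b - - a\<bar>"
      by (intro pos) auto
    then show ?thesis
      by (simp add: logistic_minus)
  qed
qed

section \<open>Linearisation at Nash distributions\<close>

lemma logitBR_nth: "lam \<noteq> 0 \<Longrightarrow> logitBR u lam x $ i = logistic (gain u i x / lam)"
proof -
  assume "lam \<noteq> 0"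
  define a b where "a = Upure u i True x / lam" and "b = Upure u i False x / lam"
  have "gain u i x / lam = a - b"
    using \<open>lam \<noteq> 0\<close> unfolding a_def b_def Upure_True_minus_False[symmetric]
    by (simp add: diff_divide_distrib)
  moreover have "exp a + exp b = exp a * (1 + exp (- (a - b)))"
    by (simp add: distrib_left exp_add[symmetric])
  ultimately show ?thesis
    by (simp add: logitBR_def logistic_def a_def b_def)
qed

lemma ND_nth: "x \<in> ND u lam \<Longrightarrow> 0 < lam \<Longrightarrow> x $ i = logistic (gain u i x / lam)"
  unfolding ND_def by (metis (mono_tags, lifting) logitBR_nth mem_Collect_eq less_irrefl)

lemma ND_nth_strictly_between: "x \<in> ND u lam \<Longrightarrow> 0 < lam \<Longrightarrow> 0 < x $ i \<and> x $ i < 1"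
  using ND_nth logistic_pos logistic_less_one by metis

lemma continuous_on_logitBR_parameter: "continuous_on {0<..} (\<lambda>lam. logitBR u lam z)"
proof -
  have "continuous_on {0<..} (\<lambda>lam. \<chi> i. logistic (gain u i z / lam))"
    by (intro continuous_on_vec_lambda continuous_intros) auto
  then show ?thesis
    by (rule continuous_on_cong[THEN iffD1, rotated 2]) (auto simp: vec_eq_iff logitBR_nth)
qed

lemma has_derivative_vec_lambda_at:
  fixes g :: "'n::finite \<Rightarrow> 'a::real_normed_vector \<Rightarrow> real"
  assumes "\<And>i. (g i has_derivative g' i) (at x)"
  shows "((\<lambda>y. \<chi> i. g i y) has_derivative (\<lambda>h. \<chi> i. g' i h)) (at x)"
proof -
  have vec_sum_axis: "(\<chi> i. f i) = (\<Sum>i\<in>UNIV. f i *\<^sub>R axis i (1::real))" for f :: "'n \<Rightarrow> real"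
    by (simp add: vec_eq_iff sum_component axis_def if_distrib[of "\<lambda>t. _ * t"] cong: if_cong)
  show ?thesis
    unfolding vec_sum_axis by (intro has_derivative_sum has_derivative_scaleR_left assms)
qed

text \<open>At a Nash distribution x, player i's logit response has slope x_i (1 - x_i) / lam as a
  function of gain u i.\<close>

definition br_weight :: "real \<Rightarrow> real^'n \<Rightarrow> 'n \<Rightarrow> real" where
  "br_weight lam x i = x $ i * (1 - x $ i) / lam"

definition diag_mult_minus_id :: "('n::finite \<Rightarrow> real) \<Rightarrow> ('n \<Rightarrow> 'n \<Rightarrow> real) \<Rightarrow> real^'n^'n" where
  "diag_mult_minus_id p W = (\<chi> i j. p i * W i j - (if i = j then 1 else 0))"

lemma sbr_field_has_derivative:
  fixes u :: "('n::finite \<Rightarrow> bool) \<Rightarrow> real"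
  assumes "lam \<noteq> 0"
  defines "s x i \<equiv> logistic (gain u i x / lam)"
  shows "(sbr_field u lam has_derivative
     (\<lambda>h. (\<chi> i. s x i * (1 - s x i) / lam * (\<Sum>j\<in>UNIV. interaction u i j x * h $ j)) - h)) (at x)"
proof -
  have field: "sbr_field u lam = (\<lambda>y. (\<chi> i. s y i) - y)"
    using assms by (auto simp: sbr_field_def vec_eq_iff logitBR_nth)
  have "((\<lambda>y. s y i) has_derivative
      (\<lambda>h. s x i * (1 - s x i) / lam * (\<Sum>j\<in>UNIV. interaction u i j x * h $ j))) (at x)" for i
  proof -
    have d1: "((\<lambda>y. gain u i y / lam) has_derivative
        (\<lambda>h. (\<Sum>j\<in>UNIV. interaction u i j x * h $ j) / lam)) (at x)"
      using assms(1) by (auto intro!: derivative_eq_intros intro: gain_has_derivative)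
    have d2: "(logistic has_derivative (\<lambda>t. t * (s x i * (1 - s x i)))) (at (gain u i x / lam))"
      using logistic_has_real_derivative[of "gain u i x / lam"]
      by (simp add: has_field_derivative_def s_def mult.commute[of _ "logistic _ * _"])
    show ?thesis
      using has_derivative_compose[OF d1 d2] unfolding s_def by (simp add: algebra_simps diff_divide_distrib)
  qed
  then show ?thesis
    unfolding field by (intro has_derivative_diff has_derivative_vec_lambda_at has_derivative_ident)
qed

lemma jacobian_sbr_field_at_ND:
  assumes "x \<in> ND u lam" "0 < lam"
  shows "jacobian (sbr_field u lam) (at x) =
    diag_mult_minus_id (br_weight lam x) (\<lambda>i j. interaction u i j x)"
proof -
  have "lam \<noteq> 0"
    using assms by simp
  then show ?thesis
    unfolding jacobian_def frechet_derivative_at[OF sbr_field_has_derivative[OF \<open>lam \<noteq> 0\<close>], symmetric]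
    using ND_nth[OF assms]
    by (simp add: matrix_def vec_eq_iff axis_def if_distrib diag_mult_minus_id_def br_weight_def
        cong: if_cong)
qed

lemma br_weight_pos: "x \<in> ND u lam \<Longrightarrow> 0 < lam \<Longrightarrow> 0 < br_weight lam x i"
  using ND_nth_strictly_between[of x u lam i] unfolding br_weight_def by simp

lemma inverse_br_weight_ge:
  assumes "x \<in> ND u lam" "0 < lam" "0 < \<delta>" "\<delta> \<le> \<bar>gain u i x\<bar>"
  shows "\<delta>^2 / (4 * lam) \<le> 1 / br_weight lam x i"
proof -
  have xi: "x $ i = logistic (gain u i x / lam)"
    by (rule ND_nth[OF assms(1,2)])
  have pos: "0 < x $ i * (1 - x $ i)"
    using ND_nth_strictly_between[OF assms(1,2)] by simp
  have "x $ i * (1 - x $ i) \<le> exp (- \<bar>gain u i x / lam\<bar>)"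
    unfolding xi by (rule logistic_times_one_minus_le)
  also have "\<dots> \<le> exp (- (\<delta> / lam))"
    using assms(2,4) by (auto simp: abs_divide divide_right_mono)
  finally have small: "x $ i * (1 - x $ i) \<le> exp (- (\<delta> / lam))" .
  have "\<delta>^2 / (4 * lam) = lam * ((\<delta> / lam)^2 / 4)"
    using assms(2) by (simp add: field_simps power2_eq_square)
  also have "\<dots> \<le> lam * exp (\<delta> / lam)"
    using assms(2,3) by (intro mult_left_mono square_div_four_le_exp) auto
  also have "\<dots> = lam / exp (- (\<delta> / lam))"
    by (simp add: exp_minus divide_inverse)
  also have "\<dots> \<le> lam / (x $ i * (1 - x $ i))"
    using small pos assms(2) by (intro divide_left_mono) auto
  finally show ?thesis
    by (simp add: br_weight_def)
qed

section \<open>Matrices of the form diag p W - I\<close>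

definition quad_form :: "('n::finite \<Rightarrow> 'n \<Rightarrow> real) \<Rightarrow> real^'n \<Rightarrow> real" where
  "quad_form W v = (\<Sum>i\<in>UNIV. \<Sum>j\<in>UNIV. v $ i * W i j * v $ j)"

definition weighted_sq_norm :: "('n::finite \<Rightarrow> real) \<Rightarrow> real^'n \<Rightarrow> real" where
  "weighted_sq_norm p v = (\<Sum>i\<in>UNIV. (v $ i)^2 / p i)"

lemma diag_mult_minus_id_mult_nth:
  "(diag_mult_minus_id p W *v v) $ i = p i * (\<Sum>j\<in>UNIV. W i j * v $ j) - v $ i"
  by (simp add: diag_mult_minus_id_def matrix_vector_mult_def left_diff_distrib sum_subtractf
      sum_distrib_left mult.assoc if_distrib[of "\<lambda>x. x * _"] cong: if_cong)

lemma quad_form_eq_sum_row: "quad_form W v = (\<Sum>i\<in>UNIV. v $ i * (\<Sum>j\<in>UNIV. W i j * v $ j))"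
  by (simp add: quad_form_def sum_distrib_left mult.assoc)

lemma quad_form_scale: "quad_form W (c *\<^sub>R v) = c^2 * quad_form W v"
  unfolding quad_form_def by (simp add: sum_distrib_left power2_eq_square algebra_simps)

lemma weighted_sq_norm_scale: "weighted_sq_norm p (c *\<^sub>R v) = c^2 * weighted_sq_norm p v"
  unfolding weighted_sq_norm_def by (simp add: sum_distrib_left power_mult_distrib)

lemma quad_form_add_scale:
  "quad_form W (v + t *\<^sub>R w) = quad_form W v
     + t * (\<Sum>i\<in>UNIV. \<Sum>j\<in>UNIV. w $ i * W i j * v $ j + v $ i * W i j * w $ j) + t^2 * quad_form W w"
  unfolding quad_form_def by (simp add: algebra_simps sum.distrib sum_distrib_left power2_eq_square)

lemma weighted_sq_norm_add_scale:
  "weighted_sq_norm p (v + t *\<^sub>R w)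
     = weighted_sq_norm p v + 2 * t * (\<Sum>i\<in>UNIV. w $ i * v $ i / p i) + t^2 * weighted_sq_norm p w"
proof -
  have "(v $ i + t * w $ i)^2 / p i
      = (v $ i)^2 / p i + 2 * t * (w $ i * v $ i / p i) + t^2 * ((w $ i)^2 / p i)" for i
    by (simp add: divide_inverse power2_eq_square algebra_simps)
  then show ?thesis
    unfolding weighted_sq_norm_def by (simp add: sum.distrib sum_distrib_left)
qed

lemma sq_div_le_weighted_sq_norm: "(\<And>i. 0 < p i) \<Longrightarrow> (v $ k)^2 / p k \<le> weighted_sq_norm p v"
  unfolding weighted_sq_norm_def by (rule member_le_sum) (auto intro!: divide_nonneg_pos)

lemma weighted_sq_norm_pos:
  assumes p: "\<And>i. 0 < p i" and "v \<noteq> 0"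
  shows "0 < weighted_sq_norm p v"
proof -
  obtain k where "v $ k \<noteq> 0"
    using \<open>v \<noteq> 0\<close> by (auto simp: vec_eq_iff)
  then have "0 < (v $ k)^2 / p k"
    using p[of k] by simp
  then show ?thesis
    using sq_div_le_weighted_sq_norm[of p, OF p, of v k] by linarith
qed

lemma diag_mult_minus_id_kernel:
  "(\<And>i. 0 < p i) \<Longrightarrow>
     diag_mult_minus_id p W *v v = 0 \<longleftrightarrow> (\<forall>i. (\<Sum>j\<in>UNIV. W i j * v $ j) = v $ i / p i)"
  by (auto simp: vec_eq_iff diag_mult_minus_id_mult_nth field_simps less_imp_neq[symmetric])

lemma invertible_diag_mult_minus_id:
  assumes "\<And>i. 0 < p i" and "\<And>v. \<forall>i. (\<Sum>j\<in>UNIV. W i j * v $ j) = v $ i / p i \<Longrightarrow> v = 0"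
  shows "invertible (diag_mult_minus_id p W)"
  unfolding invertible_left_inverse matrix_left_invertible_ker
  using assms diag_mult_minus_id_kernel by blast

lemma quad_form_eq_weighted_sq_norm:
  "\<forall>i. (\<Sum>j\<in>UNIV. W i j * v $ j) = v $ i / p i \<Longrightarrow> quad_form W v = weighted_sq_norm p v"
  unfolding quad_form_eq_sum_row weighted_sq_norm_def by (simp add: power2_eq_square)

text \<open>For an eigenvector a + i b with eigenvalue mu, summing the real and imaginary parts of the
  eigen-equations against a / p and b / p gives
  (quad_form W a - weighted_sq_norm p a) + (quad_form W b - weighted_sq_norm p b)
    = Re mu * (weighted_sq_norm p a + weighted_sq_norm p b);
  the terms carrying Im mu cancel.\<close>

lemma eigenvalue_Re_neg_if_quad_form_less:
  fixes p :: "'n::finite \<Rightarrow> real"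
  assumes p: "\<And>i. 0 < p i"
    and less: "\<And>v. v \<noteq> 0 \<Longrightarrow> quad_form W v < weighted_sq_norm p v"
    and eig: "complex_eigenvalue (diag_mult_minus_id p W) mu"
  shows "Re mu < 0"
proof -
  obtain v :: "complex^'n" where "v \<noteq> 0"
    and ev: "(\<chi> i j. complex_of_real (diag_mult_minus_id p W $ i $ j)) *v v = mu *s v"
    using eig unfolding complex_eigenvalue_def by blast
  define a b where "a = (\<chi> i. Re (v $ i))" and "b = (\<chi> i. Im (v $ i))"
  have ab: "a \<noteq> 0 \<or> b \<noteq> 0"
    using \<open>v \<noteq> 0\<close> by (auto simp: a_def b_def vec_eq_iff complex_eq_iff)
  have row: "(\<Sum>j\<in>UNIV. complex_of_real (diag_mult_minus_id p W $ i $ j) * v $ j) = mu * v $ i" for i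
    using ev by (simp add: vec_eq_iff matrix_vector_mult_def)
  have rows: "p i * (\<Sum>j\<in>UNIV. W i j * a $ j) = (Re mu + 1) * a $ i - Im mu * b $ i"
      "p i * (\<Sum>j\<in>UNIV. W i j * b $ j) = (Re mu + 1) * b $ i + Im mu * a $ i" for i
    using arg_cong[OF row[of i], of Re] arg_cong[OF row[of i], of Im]
      diag_mult_minus_id_mult_nth[of p W a i] diag_mult_minus_id_mult_nth[of p W b i]
    by (simp_all add: a_def b_def diag_mult_minus_id_def matrix_vector_mult_def algebra_simps)
  have "a $ i * (\<Sum>j\<in>UNIV. W i j * a $ j) + b $ i * (\<Sum>j\<in>UNIV. W i j * b $ j)
      = (Re mu + 1) * ((a $ i)^2 / p i + (b $ i)^2 / p i)" for i
  proof -
    have "a $ i * (\<Sum>j\<in>UNIV. W i j * a $ j) + b $ i * (\<Sum>j\<in>UNIV. W i j * b $ j)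
        = (a $ i * (p i * (\<Sum>j\<in>UNIV. W i j * a $ j)) + b $ i * (p i * (\<Sum>j\<in>UNIV. W i j * b $ j))) / p i"
      using p[of i] by (simp add: field_simps)
    also have "\<dots> = (Re mu + 1) * ((a $ i)^2 + (b $ i)^2) / p i"
      unfolding rows by (simp add: algebra_simps power2_eq_square)
    finally show ?thesis
      by (simp add: add_divide_distrib distrib_left)
  qed
  then have "quad_form W a + quad_form W b
      = (Re mu + 1) * (weighted_sq_norm p a + weighted_sq_norm p b)"
    unfolding quad_form_eq_sum_row weighted_sq_norm_def
    by (simp add: sum.distrib[symmetric] sum_distrib_left distrib_left)
  moreover have "quad_form W a + quad_form W b < weighted_sq_norm p a + weighted_sq_norm p b"
    using ab less[of a] less[of b] by (cases "a = 0"; cases "b = 0") (auto simp: quad_form_def weighted_sq_norm_def)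
  moreover have "0 < weighted_sq_norm p a + weighted_sq_norm p b"
    using ab weighted_sq_norm_pos[of p, OF p, of a] weighted_sq_norm_pos[of p, OF p, of b]
      weighted_sq_norm_pos[of p, OF p, of 0] sq_div_le_weighted_sq_norm[of p, OF p]
    by (cases "a = 0"; cases "b = 0") (auto simp: weighted_sq_norm_def)
  ultimately have "Re mu * (weighted_sq_norm p a + weighted_sq_norm p b) < 0"
      and "0 < weighted_sq_norm p a + weighted_sq_norm p b"
    by (simp_all add: algebra_simps)
  then show ?thesis
    by (simp add: mult_less_0_iff)
qed

lemma linear_coeff_eq_zero_if_quadratic_nonpos:
  fixes c d :: real
  assumes "\<And>t. 2 * t * c + t^2 * d \<le> 0"
  shows "c = 0"
proof (rule ccontr)
  assume "c \<noteq> 0"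
  define e where "e = \<bar>d\<bar> + 1"
  have "0 < e" "-1 < d / e"
    by (auto simp: e_def field_simps)
  then have "0 < (c^2 / e) * (2 + d / e)"
    using \<open>c \<noteq> 0\<close> by (intro mult_pos_pos) auto
  also have "(c^2 / e) * (2 + d / e) = 2 * (c / e) * c + (c / e)^2 * d"
    using \<open>0 < e\<close> by (simp add: field_simps power2_eq_square)
  finally show False
    using assms[of "c / e"] by linarith
qed

lemma sum_axis_mult [simp]: "(\<Sum>k\<in>UNIV. axis a (1::real) $ k * f k) = f a"
  by (simp add: axis_def if_distrib[of "\<lambda>t. t * _"] cong: if_cong)

lemma sum_mult_axis [simp]: "(\<Sum>k\<in>UNIV. f k * axis a (1::real) $ k) = f a"
  using sum_axis_mult[of a f] by (simp add: mult.commute)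

lemma weighted_sq_norm_axis: "weighted_sq_norm p (axis a 1) = 1 / p a"
  using sum_axis_mult[of a "\<lambda>k. axis a 1 $ k / p k"]
  by (simp add: weighted_sq_norm_def power2_eq_square)

lemma quad_form_axis: "quad_form W (axis a 1) = W a a"
  by (simp add: quad_form_def)

lemma compact_weighted_unit_sphere:
  fixes p :: "'n::finite \<Rightarrow> real"
  assumes p: "\<And>i. 0 < p i"
  shows "compact {v::real^'n. weighted_sq_norm p v = 1}"
proof -
  have "continuous_on UNIV (weighted_sq_norm p)"
    unfolding weighted_sq_norm_def by (intro continuous_intros) (simp add: less_imp_neq[OF p, symmetric])
  then have "closed {v::real^'n. weighted_sq_norm p v = 1}"
    using closed_Collect_eq[OF _ continuous_on_const, of "weighted_sq_norm p" 1] by auto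
  moreover have "norm v \<le> (\<Sum>i\<in>UNIV. sqrt (p i))" if "weighted_sq_norm p v = 1" for v :: "real^'n"
  proof -
    have "\<bar>v $ i\<bar> \<le> sqrt (p i)" for i
      using sq_div_le_weighted_sq_norm[of p, OF p, of v i] that p[of i]
      by (simp add: field_simps real_le_rsqrt)
    then have "(\<Sum>i\<in>UNIV. \<bar>v $ i\<bar>) \<le> (\<Sum>i\<in>UNIV. sqrt (p i))"
      by (intro sum_mono)
    then show ?thesis
      using norm_le_l1_cart[of v] by linarith
  qed
  then have "bounded {v::real^'n. weighted_sq_norm p v = 1}"
    unfolding bounded_iff by blast
  ultimately show ?thesis
    by (simp add: compact_eq_bounded_closed)
qed

lemma quad_form_attains_max:
  fixes p :: "'n::finite \<Rightarrow> real"
  assumes p: "\<And>i. 0 < p i"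
  obtains v0 where "weighted_sq_norm p v0 = 1"
    and "\<And>v. quad_form W v \<le> quad_form W v0 * weighted_sq_norm p v"
proof -
  obtain k :: 'n where True by blast
  have "weighted_sq_norm p (sqrt (p k) *\<^sub>R axis k 1) = 1"
    using p[of k] by (simp add: weighted_sq_norm_scale weighted_sq_norm_axis)
  then have ne: "{v. weighted_sq_norm p v = 1} \<noteq> {}"
    by blast
  have "continuous_on S (quad_form W)" for S
    unfolding quad_form_def by (intro continuous_intros)
  then obtain v0 where v0: "weighted_sq_norm p v0 = 1"
    and max: "\<And>y. weighted_sq_norm p y = 1 \<Longrightarrow> quad_form W y \<le> quad_form W v0"
    using continuous_attains_sup[OF compact_weighted_unit_sphere[OF p] ne] by blast
  have "quad_form W v \<le> quad_form W v0 * weighted_sq_norm p v" for v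
  proof (cases "v = 0")
    case True
    then show ?thesis
      by (simp add: quad_form_def weighted_sq_norm_def)
  next
    case False
    define c where "c = 1 / sqrt (weighted_sq_norm p v)"
    have pos: "0 < weighted_sq_norm p v"
      using weighted_sq_norm_pos[of p, OF p False] .
    then have c2: "c^2 = 1 / weighted_sq_norm p v"
      by (simp add: c_def power_divide)
    then have "quad_form W (c *\<^sub>R v) \<le> quad_form W v0"
      using pos by (intro max) (simp add: weighted_sq_norm_scale)
    then show ?thesis
      using pos by (simp add: quad_form_scale c2 field_simps)
  qed
  with v0 that show ?thesis
    by blast
qed

text \<open>Stationarity of the Rayleigh quotient quad_form W v / weighted_sq_norm p v at its maximum.\<close>

lemma quad_form_maximiser_eigenvector:
  fixes p :: "'n::finite \<Rightarrow> real"
  assumes p: "\<And>i. 0 < p i" and sym: "\<And>i j. W i j = W j i"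
    and v0: "weighted_sq_norm p v0 = 1"
    and max: "\<And>v. quad_form W v \<le> quad_form W v0 * weighted_sq_norm p v"
  shows "diag_mult_minus_id p W *v v0 = (quad_form W v0 - 1) *\<^sub>R v0"
proof -
  define m where "m = quad_form W v0"
  have grad: "(\<Sum>j\<in>UNIV. W k j * v0 $ j) = m * v0 $ k / p k" for k
  proof -
    define w :: "real^'n" where "w = axis k 1"
    have "(\<Sum>i\<in>UNIV. \<Sum>j\<in>UNIV. w $ i * W i j * v0 $ j) = (\<Sum>j\<in>UNIV. W k j * v0 $ j)"
      by (simp add: w_def mult.assoc sum_distrib_left[symmetric])
    moreover have "(\<Sum>i\<in>UNIV. \<Sum>j\<in>UNIV. v0 $ i * W i j * w $ j) = (\<Sum>j\<in>UNIV. W k j * v0 $ j)"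
      by (simp add: w_def sym[of _ k] mult.commute)
    ultimately have cross: "(\<Sum>i\<in>UNIV. \<Sum>j\<in>UNIV. w $ i * W i j * v0 $ j + v0 $ i * W i j * w $ j)
        = 2 * (\<Sum>j\<in>UNIV. W k j * v0 $ j)"
      by (simp add: sum.distrib)
    have lin: "(\<Sum>i\<in>UNIV. w $ i * v0 $ i / p i) = v0 $ k / p k"
      using sum_axis_mult[of k "\<lambda>i. v0 $ i / p i"] by (simp add: w_def)
    have "2 * t * ((\<Sum>j\<in>UNIV. W k j * v0 $ j) - m * (v0 $ k / p k))
        + t^2 * (quad_form W w - m * weighted_sq_norm p w) \<le> 0" for t
      using max[of "v0 + t *\<^sub>R w"]
      unfolding quad_form_add_scale weighted_sq_norm_add_scale cross lin m_def[symmetric] v0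
      by (simp add: w_def algebra_simps)
    then show ?thesis
      using linear_coeff_eq_zero_if_quadratic_nonpos by fastforce
  qed
  have "(diag_mult_minus_id p W *v v0) $ k = (m - 1) * v0 $ k" for k
    unfolding diag_mult_minus_id_mult_nth grad using p[of k] by (simp add: field_simps)
  then show ?thesis
    by (simp add: vec_eq_iff m_def)
qed

lemma complex_eigenvalue_of_real:
  assumes "A *v v = c *\<^sub>R v" "v \<noteq> 0"
  shows "complex_eigenvalue A (complex_of_real c)"
proof -
  define V where "V = (\<chi> i. complex_of_real (v $ i))"
  have "V \<noteq> 0"
    using assms(2) by (auto simp: V_def vec_eq_iff)
  moreover have "(\<Sum>j\<in>UNIV. complex_of_real (A $ i $ j) * complex_of_real (v $ j))
      = complex_of_real c * complex_of_real (v $ i)" for i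
    using arg_cong[OF assms(1), of "\<lambda>w. complex_of_real (w $ i)"]
    by (simp add: matrix_vector_mult_def)
  then have "(\<chi> i j. complex_of_real (A $ i $ j)) *v V = complex_of_real c *s V"
    by (simp add: vec_eq_iff matrix_vector_mult_def V_def)
  ultimately show ?thesis
    unfolding complex_eigenvalue_def by blast
qed

lemma eigenvalue_Re_nonneg_if_quad_form_ge:
  fixes p :: "'n::finite \<Rightarrow> real"
  assumes p: "\<And>i. 0 < p i" and sym: "\<And>i j. W i j = W j i"
    and "v1 \<noteq> 0" and ge: "weighted_sq_norm p v1 \<le> quad_form W v1"
  shows "\<exists>mu. complex_eigenvalue (diag_mult_minus_id p W) mu \<and> 0 \<le> Re mu"
proof -
  obtain v0 where v0: "weighted_sq_norm p v0 = 1"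
    and max: "\<And>v. quad_form W v \<le> quad_form W v0 * weighted_sq_norm p v"
    using quad_form_attains_max[of p, OF p] by blast
  have "v0 \<noteq> 0"
    using v0 by (auto simp: weighted_sq_norm_def)
  moreover have "diag_mult_minus_id p W *v v0 = (quad_form W v0 - 1) *\<^sub>R v0"
    by (rule quad_form_maximiser_eigenvector) (use p sym v0 max in auto)
  ultimately have "complex_eigenvalue (diag_mult_minus_id p W) (complex_of_real (quad_form W v0 - 1))"
    by (intro complex_eigenvalue_of_real)
  moreover have "1 * weighted_sq_norm p v1 \<le> quad_form W v0 * weighted_sq_norm p v1"
    using ge max[of v1] by linarith
  then have "1 \<le> quad_form W v0"
    using weighted_sq_norm_pos[of p, OF p \<open>v1 \<noteq> 0\<close>] by (rule mult_right_le_imp_le)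
  ultimately show ?thesis
    by force
qed

lemma exists_quad_form_ge_on_two_axes:
  fixes W :: "'n::finite \<Rightarrow> 'n \<Rightarrow> real"
  assumes "i \<noteq> j" "W i i = 0" "W j j = 0" "W i j = W j i"
    and small: "1 / p i + 1 / p j \<le> 2 * \<bar>W i j\<bar>"
  shows "\<exists>v. v \<noteq> 0 \<and> weighted_sq_norm p v \<le> quad_form W v"
proof -
  define s :: real where "s = (if W i j < 0 then -1 else 1)"
  define v :: "real^'n" where "v = axis i 1 + s *\<^sub>R axis j 1"
  have "v $ i = 1"
    using assms(1) by (simp add: v_def axis_def)
  moreover have "quad_form W v = 2 * \<bar>W i j\<bar>"
    using assms(2-4) unfolding v_def quad_form_add_scale quad_form_axis
    by (simp add: sum.distrib s_def)
  moreover have "(\<Sum>k\<in>UNIV. axis j 1 $ k * axis i 1 $ k / p k) = 0"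
    using sum_axis_mult[of j "\<lambda>k. axis i 1 $ k / p k"] assms(1) by (simp add: axis_def)
  then have "weighted_sq_norm p v = 1 / p i + 1 / p j"
    unfolding v_def weighted_sq_norm_add_scale weighted_sq_norm_axis by (simp add: s_def)
  ultimately show ?thesis
    using small by (intro exI[of _ v]) auto
qed

section \<open>Local analysis near regular equilibria\<close>

abbreviation hessian_at :: "(('n::finite \<Rightarrow> bool) \<Rightarrow> real) \<Rightarrow> real^'n \<Rightarrow> 'n \<Rightarrow> 'n \<Rightarrow> real" where
  "hessian_at u x \<equiv> \<lambda>i j. interaction u i j x"

lemma stable_hyperbolic_at_ND_if_quad_form_less:
  assumes x: "x \<in> ND u lam" "0 < lam"
    and less: "\<And>v. v \<noteq> 0 \<Longrightarrow> quad_form (hessian_at u x) v < weighted_sq_norm (br_weight lam x) v"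
  shows "hyperbolic_pt (sbr_field u lam) x \<and> linearly_stable (sbr_field u lam) x"
proof -
  have p: "\<And>i. 0 < br_weight lam x i"
    using br_weight_pos[OF x] .
  have "v = 0" if "\<forall>i. (\<Sum>j\<in>UNIV. interaction u i j x * v $ j) = v $ i / br_weight lam x i" for v
    using less[of v] quad_form_eq_weighted_sq_norm[OF that] by force
  then have "invertible (jacobian (sbr_field u lam) (at x))"
    unfolding jacobian_sbr_field_at_ND[OF x] by (intro invertible_diag_mult_minus_id p) blast
  moreover have "linearly_stable (sbr_field u lam) x"
    unfolding linearly_stable_def jacobian_sbr_field_at_ND[OF x]
    using eigenvalue_Re_neg_if_quad_form_less[of "br_weight lam x", OF p less] by blast
  ultimately show ?thesis
    by (simp add: hyperbolic_pt_def)
qed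

lemma unstable_hyperbolic_at_ND:
  assumes x: "x \<in> ND u lam" "0 < lam"
    and kernel: "\<And>v. \<forall>i. (\<Sum>j\<in>UNIV. interaction u i j x * v $ j) = v $ i / br_weight lam x i \<Longrightarrow> v = 0"
    and "v \<noteq> 0" and ge: "weighted_sq_norm (br_weight lam x) v \<le> quad_form (hessian_at u x) v"
  shows "hyperbolic_pt (sbr_field u lam) x \<and> \<not> linearly_stable (sbr_field u lam) x"
proof -
  have p: "\<And>i. 0 < br_weight lam x i"
    using br_weight_pos[OF x] .
  have "invertible (jacobian (sbr_field u lam) (at x))"
    unfolding jacobian_sbr_field_at_ND[OF x] by (intro invertible_diag_mult_minus_id p kernel)
  moreover obtain mu where eig: "complex_eigenvalue (jacobian (sbr_field u lam) (at x)) mu"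
    and "0 \<le> Re mu"
    unfolding jacobian_sbr_field_at_ND[OF x]
    using eigenvalue_Re_nonneg_if_quad_form_ge[of "br_weight lam x", OF p interaction_sym \<open>v \<noteq> 0\<close> ge]
    by blast
  have "\<not> linearly_stable (sbr_field u lam) x"
  proof
    assume "linearly_stable (sbr_field u lam) x"
    then have "Re mu < 0"
      using eig unfolding linearly_stable_def by blast
    then show False
      using \<open>0 \<le> Re mu\<close> by simp
  qed
  ultimately show ?thesis
    by (simp add: hyperbolic_pt_def)
qed

lemma abs_sum_mult_le:
  fixes a v :: "'a \<Rightarrow> real"
  assumes "\<And>j. j \<in> S \<Longrightarrow> \<bar>a j\<bar> \<le> K"
  shows "\<bar>\<Sum>j\<in>S. a j * v j\<bar> \<le> K * (\<Sum>j\<in>S. \<bar>v j\<bar>)"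
proof -
  have "\<bar>\<Sum>j\<in>S. a j * v j\<bar> \<le> (\<Sum>j\<in>S. \<bar>a j * v j\<bar>)"
    by (rule sum_abs)
  also have "\<dots> = (\<Sum>j\<in>S. \<bar>a j\<bar> * \<bar>v j\<bar>)"
    by (simp add: abs_mult)
  also have "\<dots> \<le> (\<Sum>j\<in>S. K * \<bar>v j\<bar>)"
    by (intro sum_mono mult_right_mono assms) auto
  finally show ?thesis
    by (simp add: sum_distrib_left)
qed

lemma quad_form_le_card_mult_sum_sq:
  fixes W :: "'n::finite \<Rightarrow> 'n \<Rightarrow> real"
  assumes K: "\<And>i j. \<bar>W i j\<bar> \<le> K"
  shows "quad_form W v \<le> K * real CARD('n) * (\<Sum>i\<in>UNIV. (v $ i)^2)"
proof -
  have "v $ i * W i j * v $ j \<le> K * ((v $ i)^2 + (v $ j)^2) / 2" for i j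
  proof -
    have "v $ i * W i j * v $ j \<le> \<bar>v $ i * W i j * v $ j\<bar>"
      by (rule abs_ge_self)
    also have "\<dots> = \<bar>W i j\<bar> * (\<bar>v $ i\<bar> * \<bar>v $ j\<bar>)"
      by (simp add: abs_mult)
    also have "\<dots> \<le> K * (\<bar>v $ i\<bar> * \<bar>v $ j\<bar>)"
      by (intro mult_right_mono K) auto
    also have "\<dots> \<le> K * (((v $ i)^2 + (v $ j)^2) / 2)"
    proof (rule mult_left_mono)
      show "\<bar>v $ i\<bar> * \<bar>v $ j\<bar> \<le> ((v $ i)^2 + (v $ j)^2) / 2"
        using sum_squares_bound[of "\<bar>v $ i\<bar>" "\<bar>v $ j\<bar>"] by simp
      show "0 \<le> K"
        using K[of i j] by linarith
    qed
    finally show ?thesis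
      by simp
  qed
  then have "quad_form W v \<le> (\<Sum>i\<in>UNIV. \<Sum>j\<in>UNIV. K * ((v $ i)^2 + (v $ j)^2) / 2)"
    unfolding quad_form_def by (intro sum_mono) auto
  also have "\<dots> = K * real CARD('n) * (\<Sum>i\<in>UNIV. (v $ i)^2)"
    by (simp add: sum.distrib sum_divide_distrib[symmetric] sum_distrib_left[symmetric] add_divide_distrib
        distrib_left sum.swap[of "\<lambda>i j. (v $ j)^2"] algebra_simps)
  finally show ?thesis .
qed

lemma quad_form_less_at_ND_if_gains_large:
  fixes u :: "('n::finite \<Rightarrow> bool) \<Rightarrow> real"
  assumes x: "x \<in> ND u lam" "0 < lam"
    and "0 < \<delta>" and gains: "\<And>i. \<delta> \<le> \<bar>gain u i x\<bar>"
    and K: "\<And>i j. \<bar>interaction u i j x\<bar> \<le> K"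
    and small: "4 * lam * K * real CARD('n) < \<delta>^2"
    and "v \<noteq> 0"
  shows "quad_form (hessian_at u x) v < weighted_sq_norm (br_weight lam x) v"
proof -
  obtain k where "v $ k \<noteq> 0"
    using \<open>v \<noteq> 0\<close> by (auto simp: vec_eq_iff)
  then have "0 < (v $ k)^2"
    by simp
  moreover have "(v $ k)^2 \<le> (\<Sum>i\<in>UNIV. (v $ i)^2)"
    by (rule member_le_sum) auto
  ultimately have "0 < (\<Sum>i\<in>UNIV. (v $ i)^2)"
    by linarith
  have "K * real CARD('n) < \<delta>^2 / (4 * lam)"
    using small x(2) by (simp add: pos_less_divide_eq mult.commute mult.left_commute)
  have "quad_form (hessian_at u x) v \<le> K * real CARD('n) * (\<Sum>i\<in>UNIV. (v $ i)^2)"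
    by (rule quad_form_le_card_mult_sum_sq) (rule K)
  also have "\<dots> < \<delta>^2 / (4 * lam) * (\<Sum>i\<in>UNIV. (v $ i)^2)"
    using \<open>K * real CARD('n) < \<delta>^2 / (4 * lam)\<close> \<open>0 < (\<Sum>i\<in>UNIV. (v $ i)^2)\<close>
    by (rule mult_strict_right_mono)
  also have "\<dots> \<le> weighted_sq_norm (br_weight lam x) v"
    unfolding weighted_sq_norm_def sum_distrib_left
  proof (intro sum_mono)
    fix i
    have "\<delta>^2 / (4 * lam) * (v $ i)^2 \<le> 1 / br_weight lam x i * (v $ i)^2"
      using inverse_br_weight_ge[OF x \<open>0 < \<delta>\<close> gains[of i]] by (rule mult_right_mono) simp
    then show "\<delta>^2 / (4 * lam) * (v $ i)^2 \<le> (v $ i)^2 / br_weight lam x i"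
      by simp
  qed
  finally show ?thesis .
qed

text \<open>Perturbation of an invertible block: if W v = q v, where q is small on M, huge off M,
  and W restricted to M is close to a matrix W0 with left inverse B there, then v = 0.
  The mass of v off M is controlled by its mass on M, and the latter then contracts.\<close>

lemma mass_off_block_le:
  fixes W :: "'n::finite \<Rightarrow> 'n \<Rightarrow> real"
  assumes W: "\<And>i j. \<bar>W i j\<bar> \<le> K"
    and "0 \<le> Q" and q_off: "\<And>i. i \<notin> M \<Longrightarrow> Q \<le> q i"
    and eq: "\<And>i. (\<Sum>j\<in>UNIV. W i j * v $ j) = v $ i * q i"
  shows "Q * (\<Sum>i\<in>-M. \<bar>v $ i\<bar>) \<le> real CARD('n) * K * (\<Sum>i\<in>UNIV. \<bar>v $ i\<bar>)"
proof -
  have "0 \<le> K"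
    using W[of undefined undefined] by linarith
  have "Q * \<bar>v $ i\<bar> \<le> K * (\<Sum>j\<in>UNIV. \<bar>v $ j\<bar>)" if "i \<notin> M" for i
  proof -
    have "Q * \<bar>v $ i\<bar> \<le> q i * \<bar>v $ i\<bar>"
      using q_off[OF that] by (rule mult_right_mono) simp
    also have "\<dots> = \<bar>\<Sum>j\<in>UNIV. W i j * v $ j\<bar>"
      using q_off[OF that] eq[of i] \<open>0 \<le> Q\<close> by (simp add: abs_mult)
    also have "\<dots> \<le> K * (\<Sum>j\<in>UNIV. \<bar>v $ j\<bar>)"
      by (rule abs_sum_mult_le) (rule W)
    finally show ?thesis .
  qed
  then have "Q * (\<Sum>i\<in>-M. \<bar>v $ i\<bar>) \<le> (\<Sum>i\<in>-M. K * (\<Sum>j\<in>UNIV. \<bar>v $ j\<bar>))"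
    unfolding sum_distrib_left by (intro sum_mono) auto
  also have "\<dots> \<le> real CARD('n) * (K * (\<Sum>j\<in>UNIV. \<bar>v $ j\<bar>))"
    using \<open>0 \<le> K\<close> by (auto intro!: mult_right_mono card_mono sum_nonneg)
  finally show ?thesis
    by (simp add: mult.assoc)
qed

lemma mass_on_block_le:
  fixes W W0 B :: "'n::finite \<Rightarrow> 'n \<Rightarrow> real"
  assumes inv: "\<And>l j. l \<in> M \<Longrightarrow> j \<in> M \<Longrightarrow> (\<Sum>i\<in>M. B l i * W0 i j) = (if l = j then 1 else 0)"
    and W: "\<And>i j. \<bar>W i j\<bar> \<le> K"
    and close: "\<And>i j. i \<in> M \<Longrightarrow> j \<in> M \<Longrightarrow> \<bar>W i j - W0 i j\<bar> \<le> \<epsilon>"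
    and q_on: "\<And>i. i \<in> M \<Longrightarrow> 0 \<le> q i \<and> q i \<le> g"
    and eq: "\<And>i. (\<Sum>j\<in>UNIV. W i j * v $ j) = v $ i * q i"
  defines "\<alpha> \<equiv> \<Sum>i\<in>M. \<bar>v $ i\<bar>" and "\<beta> \<equiv> \<Sum>i\<in>-M. \<bar>v $ i\<bar>"
  shows "\<alpha> \<le> (\<Sum>l\<in>M. \<Sum>i\<in>M. \<bar>B l i\<bar>) * ((g + \<epsilon>) * \<alpha> + K * \<beta>)"
proof -
  have split: "(\<Sum>j\<in>UNIV. f j) = (\<Sum>j\<in>M. f j) + (\<Sum>j\<in>-M. f j)" for f :: "'n \<Rightarrow> real"
    using sum.subset_diff[of M "UNIV::'n set" f] by (simp add: Compl_eq_Diff_UNIV add.commute)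
  define y where "y i = (\<Sum>j\<in>M. W0 i j * v $ j)" for i
  have y: "\<bar>y i\<bar> \<le> (g + \<epsilon>) * \<alpha> + K * \<beta>" if "i \<in> M" for i
  proof -
    have "y i = v $ i * q i - (\<Sum>j\<in>-M. W i j * v $ j) - (\<Sum>j\<in>M. (W i j - W0 i j) * v $ j)"
      using eq[of i] split[of "\<lambda>j. W i j * v $ j"]
      by (simp add: y_def algebra_simps sum_subtractf)
    moreover have "\<bar>v $ i * q i\<bar> \<le> g * \<alpha>"
      using member_le_sum[of i M "\<lambda>i. \<bar>v $ i\<bar>"] q_on[OF that] that
      by (auto simp: \<alpha>_def abs_mult mult.commute intro!: mult_mono)
    moreover have "\<bar>\<Sum>j\<in>-M. W i j * v $ j\<bar> \<le> K * \<beta>"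
      unfolding \<beta>_def by (rule abs_sum_mult_le) (rule W)
    moreover have "\<bar>\<Sum>j\<in>M. (W i j - W0 i j) * v $ j\<bar> \<le> \<epsilon> * \<alpha>"
      unfolding \<alpha>_def by (rule abs_sum_mult_le) (rule close[OF that])
    ultimately show ?thesis
      by (simp add: algebra_simps)
  qed
  have "\<bar>v $ l\<bar> \<le> (\<Sum>i\<in>M. \<bar>B l i\<bar>) * ((g + \<epsilon>) * \<alpha> + K * \<beta>)" if "l \<in> M" for l
  proof -
    have "(\<Sum>i\<in>M. B l i * y i) = (\<Sum>i\<in>M. \<Sum>j\<in>M. B l i * W0 i j * v $ j)"
      by (simp add: y_def sum_distrib_left mult.assoc)
    also have "\<dots> = (\<Sum>j\<in>M. \<Sum>i\<in>M. B l i * W0 i j * v $ j)"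
      by (rule sum.swap)
    also have "\<dots> = (\<Sum>j\<in>M. (\<Sum>i\<in>M. B l i * W0 i j) * v $ j)"
      by (simp add: sum_distrib_right)
    also have "\<dots> = v $ l"
      using that by (simp add: inv if_distrib[of "\<lambda>t. t * _"] cong: if_cong)
    finally have "\<bar>v $ l\<bar> = \<bar>\<Sum>i\<in>M. B l i * y i\<bar>"
      by simp
    also have "\<dots> \<le> (\<Sum>i\<in>M. \<bar>B l i\<bar> * ((g + \<epsilon>) * \<alpha> + K * \<beta>))"
      by (rule order_trans[OF sum_abs sum_mono]) (auto simp: abs_mult intro!: mult_left_mono y)
    finally show ?thesis
      by (simp add: sum_distrib_right)
  qed
  then have "\<alpha> \<le> (\<Sum>l\<in>M. (\<Sum>i\<in>M. \<bar>B l i\<bar>) * ((g + \<epsilon>) * \<alpha> + K * \<beta>))"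
    unfolding \<alpha>_def by (rule sum_mono)
  then show ?thesis
    by (simp add: sum_distrib_right)
qed

lemma kernel_trivial_near_invertible_block:
  fixes W W0 B :: "'n::finite \<Rightarrow> 'n \<Rightarrow> real"
  defines "N \<equiv> real CARD('n)"
  assumes inv: "\<And>l j. l \<in> M \<Longrightarrow> j \<in> M \<Longrightarrow> (\<Sum>i\<in>M. B l i * W0 i j) = (if l = j then 1 else 0)"
    and W: "\<And>i j. \<bar>W i j\<bar> \<le> K"
    and close: "\<And>i j. i \<in> M \<Longrightarrow> j \<in> M \<Longrightarrow> \<bar>W i j - W0 i j\<bar> \<le> \<epsilon>"
    and q_on: "\<And>i. i \<in> M \<Longrightarrow> 0 \<le> q i \<and> q i \<le> g"
    and q_off: "\<And>i. i \<notin> M \<Longrightarrow> Q \<le> q i"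
    and big: "N * K < Q"
    and small: "(\<Sum>l\<in>M. \<Sum>i\<in>M. \<bar>B l i\<bar>) * (g + \<epsilon> + K * (N * K / (Q - N * K))) < 1"
    and eq: "\<And>i. (\<Sum>j\<in>UNIV. W i j * v $ j) = v $ i * q i"
  shows "v = 0"
proof -
  define \<alpha> \<beta> where "\<alpha> = (\<Sum>i\<in>M. \<bar>v $ i\<bar>)" and "\<beta> = (\<Sum>i\<in>-M. \<bar>v $ i\<bar>)"
  define S where "S = (\<Sum>l\<in>M. \<Sum>i\<in>M. \<bar>B l i\<bar>)"
  have "0 \<le> \<alpha>" "0 \<le> \<beta>" "0 \<le> S" "0 \<le> K"
    using W[of undefined undefined] by (auto simp: \<alpha>_def \<beta>_def S_def intro!: sum_nonneg)
  have "(\<Sum>i\<in>UNIV. \<bar>v $ i\<bar>) = \<alpha> + \<beta>"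
    using sum.subset_diff[of M "UNIV::'n set" "\<lambda>i. \<bar>v $ i\<bar>"]
    by (simp add: \<alpha>_def \<beta>_def Compl_eq_Diff_UNIV add.commute)
  moreover have "0 \<le> Q"
    using big \<open>0 \<le> K\<close> by (smt (verit) N_def of_nat_0_le_iff zero_le_mult_iff)
  ultimately have "(Q - N * K) * \<beta> \<le> N * K * \<alpha>"
    using mass_off_block_le[OF W \<open>0 \<le> Q\<close> q_off eq] by (simp add: N_def \<beta>_def algebra_simps)
  then have "\<beta> \<le> N * K * \<alpha> / (Q - N * K)"
    using big by (simp add: pos_le_divide_eq mult.commute)
  then have "K * \<beta> \<le> K * (N * K * \<alpha> / (Q - N * K))"
    using \<open>0 \<le> K\<close> by (rule mult_left_mono)
  then have "K * \<beta> \<le> K * (N * K / (Q - N * K)) * \<alpha>"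
    by (simp add: mult.assoc)
  then have "S * ((g + \<epsilon>) * \<alpha> + K * \<beta>) \<le> S * ((g + \<epsilon>) * \<alpha> + K * (N * K / (Q - N * K)) * \<alpha>)"
    using \<open>0 \<le> S\<close> by (intro mult_left_mono) auto
  then have "\<alpha> \<le> S * (g + \<epsilon> + K * (N * K / (Q - N * K))) * \<alpha>"
    using mass_on_block_le[OF inv W close q_on eq]
    unfolding \<alpha>_def[symmetric] \<beta>_def[symmetric] S_def[symmetric] by (simp add: algebra_simps)
  then have "(1 - S * (g + \<epsilon> + K * (N * K / (Q - N * K)))) * \<alpha> \<le> 0"
    by (simp add: algebra_simps)
  then have "\<alpha> = 0"
    using small \<open>0 \<le> \<alpha>\<close> unfolding S_def[symmetric] by (simp add: mult_le_0_iff)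
  then have "(Q - N * K) * \<beta> \<le> 0"
    using \<open>(Q - N * K) * \<beta> \<le> N * K * \<alpha>\<close> by simp
  then have "\<beta> = 0"
    using big \<open>0 \<le> \<beta>\<close> by (simp add: mult_le_0_iff)
  with \<open>\<alpha> = 0\<close> have "\<forall>i\<in>M. v $ i = 0" "\<forall>i\<in>-M. v $ i = 0"
    by (simp_all add: \<alpha>_def \<beta>_def sum_nonneg_eq_0_iff)
  then show ?thesis
    by (auto simp: vec_eq_iff)
qed

lemma ND_subset_simplex_prod: "x \<in> ND u lam \<Longrightarrow> x \<in> simplex_prod"
  by (simp add: ND_def)

lemma NE_subset_simplex_prod: "x \<in> NE u \<Longrightarrow> x \<in> simplex_prod"
  by (simp add: NE_def)

lemma regular_NE_pure_coordinate:
  assumes "regular_NE u xs" "i \<notin> mixing_players xs"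
  shows "(xs $ i = 1 \<and> 0 < gain u i xs) \<or> (xs $ i = 0 \<and> gain u i xs < 0)"
proof -
  have "0 \<le> xs $ i" "xs $ i \<le> 1"
    using assms(1) NE_subset_simplex_prod[of xs u] by (auto simp: regular_NE_def simplex_prod_def)
  then have "xs $ i = 0 \<or> xs $ i = 1"
    using assms(2) by (auto simp: mixing_players_def)
  then show ?thesis
    using assms(1) unfolding regular_NE_def quasi_strict_def Upure_True_minus_False[symmetric]
    by force
qed

lemma eventually_nhds_forall_close:
  fixes f :: "'k::finite \<Rightarrow> 'a::metric_space \<Rightarrow> real"
  assumes "\<And>k. continuous_on UNIV (f k)" "0 < e"
  shows "eventually (\<lambda>x. \<forall>k. \<bar>f k x - f k a\<bar> < e) (nhds a)"
proof (rule eventually_all_finite)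
  fix k
  obtain d where "0 < d" "\<forall>x. dist x a < d \<longrightarrow> dist (f k x) (f k a) < e"
    using assms unfolding continuous_on_iff by blast
  then show "eventually (\<lambda>x. \<bar>f k x - f k a\<bar> < e) (nhds a)"
    unfolding eventually_nhds_metric by (auto simp: dist_real_def)
qed

lemma near_regular_NE:
  fixes xs :: "real^'n::finite"
  assumes "regular_NE u xs" "0 < \<epsilon>"
  obtains \<delta> c0 r where "0 < \<delta>" "0 < c0" "0 < r"
    and "\<And>i. i \<notin> mixing_players xs \<Longrightarrow> 2 * \<delta> \<le> \<bar>gain u i xs\<bar>"
    and "\<And>x i. dist x xs < r \<Longrightarrow> \<bar>gain u i x - gain u i xs\<bar> < \<delta>"
    and "\<And>x i. dist x xs < r \<Longrightarrow> i \<in> mixing_players xs \<Longrightarrow> c0 \<le> x $ i * (1 - x $ i)"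
    and "\<And>x i j. dist x xs < r \<Longrightarrow> \<bar>interaction u i j x - interaction u i j xs\<bar> < \<epsilon>"
proof -
  define M where "M = mixing_players xs"
  define \<delta> where "\<delta> = Min (insert 1 ((\<lambda>i. \<bar>gain u i xs\<bar>) ` (- M))) / 2"
  have "gain u i xs \<noteq> 0" if "i \<notin> M" for i
    using regular_NE_pure_coordinate[OF assms(1)] that by (force simp: M_def)
  then have "0 < \<delta>" and \<delta>: "\<And>i. i \<notin> M \<Longrightarrow> 2 * \<delta> \<le> \<bar>gain u i xs\<bar>"
    by (auto simp: \<delta>_def Min_gr_iff Min_le)
  define c0 where "c0 = Min (insert 1 ((\<lambda>i. xs $ i * (1 - xs $ i)) ` M)) / 2"
  have "0 < c0" and c0: "\<And>i. i \<in> M \<Longrightarrow> 2 * c0 \<le> xs $ i * (1 - xs $ i)"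
    by (auto simp: c0_def Min_gr_iff Min_le M_def mixing_players_def)
  have "eventually (\<lambda>x. (\<forall>i. \<bar>gain u i x - gain u i xs\<bar> < \<delta>)
      \<and> (\<forall>i. \<bar>x $ i * (1 - x $ i) - xs $ i * (1 - xs $ i)\<bar> < c0)
      \<and> (\<forall>ij. \<bar>interaction u (fst ij) (snd ij) x - interaction u (fst ij) (snd ij) xs\<bar> < \<epsilon>)) (nhds xs)"
    using \<open>0 < \<delta>\<close> \<open>0 < c0\<close> assms(2)
    by (intro eventually_conj eventually_nhds_forall_close) (auto intro!: continuous_intros)
  then obtain r where "0 < r" and r: "\<And>x. dist x xs < r \<Longrightarrow> (\<forall>i. \<bar>gain u i x - gain u i xs\<bar> < \<delta>)
      \<and> (\<forall>i. \<bar>x $ i * (1 - x $ i) - xs $ i * (1 - xs $ i)\<bar> < c0)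
      \<and> (\<forall>ij. \<bar>interaction u (fst ij) (snd ij) x - interaction u (fst ij) (snd ij) xs\<bar> < \<epsilon>)"
    unfolding eventually_nhds_metric by blast
  show ?thesis
  proof (rule that[OF \<open>0 < \<delta>\<close> \<open>0 < c0\<close> \<open>0 < r\<close>])
    fix x i assume "dist x xs < r" "i \<in> mixing_players xs"
    then have "\<bar>x $ i * (1 - x $ i) - xs $ i * (1 - xs $ i)\<bar> < c0" "2 * c0 \<le> xs $ i * (1 - xs $ i)"
      using r c0[of i] unfolding M_def by blast+
    then show "c0 \<le> x $ i * (1 - x $ i)"
      by linarith
  qed (use \<delta> r in \<open>auto simp: M_def\<close>)
qed

definition payoff_size :: "(('n::finite \<Rightarrow> bool) \<Rightarrow> real) \<Rightarrow> real" where
  "payoff_size u = 4 * (\<Sum>s\<in>UNIV. \<bar>u s\<bar>) + 1"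

lemma payoff_size_ge_one: "1 \<le> payoff_size u"
  by (simp add: payoff_size_def sum_nonneg)

lemma abs_interaction_le_payoff_size:
  "x \<in> simplex_prod \<Longrightarrow> \<bar>interaction u i j x\<bar> \<le> payoff_size u"
  using abs_interaction_le[of x u i j] by (simp add: payoff_size_def)

lemma local_stability_at_pure_NE:
  fixes xs :: "real^'n::finite"
  assumes "regular_NE u xs" "mixing_players xs = {}"
  shows "\<exists>r>0. \<exists>l>0. \<forall>lam x. 0 < lam \<longrightarrow> lam < l \<longrightarrow> x \<in> ND u lam \<longrightarrow> dist x xs < r \<longrightarrow>
           hyperbolic_pt (sbr_field u lam) x \<and> linearly_stable (sbr_field u lam) x"
proof -
  obtain \<delta> c0 r where "0 < \<delta>" "0 < r"
    and \<delta>: "\<And>i. 2 * \<delta> \<le> \<bar>gain u i xs\<bar>"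
    and close: "\<And>x i. dist x xs < r \<Longrightarrow> \<bar>gain u i x - gain u i xs\<bar> < \<delta>"
    using near_regular_NE[OF assms(1) zero_less_one] assms(2) by (metis empty_iff)
  define K N where "K = payoff_size u" and "N = real CARD('n)"
  define l where "l = \<delta>^2 / (4 * K * N)"
  have "0 < l"
    using \<open>0 < \<delta>\<close> payoff_size_ge_one[of u] by (simp add: l_def K_def N_def)
  have "hyperbolic_pt (sbr_field u lam) x \<and> linearly_stable (sbr_field u lam) x"
    if lam: "0 < lam" "lam < l" and x: "x \<in> ND u lam" "dist x xs < r" for lam x
  proof (rule stable_hyperbolic_at_ND_if_quad_form_less[OF x(1) lam(1)])
    fix v :: "real^'n" assume "v \<noteq> 0"
    show "quad_form (hessian_at u x) v < weighted_sq_norm (br_weight lam x) v"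
    proof (rule quad_form_less_at_ND_if_gains_large[OF x(1) lam(1) \<open>0 < \<delta>\<close> _ _ _ \<open>v \<noteq> 0\<close>])
      show "\<delta> \<le> \<bar>gain u i x\<bar>" for i
        using \<delta>[of i] close[OF x(2), of i] by linarith
      show "\<bar>interaction u i j x\<bar> \<le> K" for i j
        using abs_interaction_le_payoff_size[OF ND_subset_simplex_prod[OF x(1)]] by (simp add: K_def)
      show "4 * lam * K * real CARD('n) < \<delta>^2"
        using lam payoff_size_ge_one[of u] by (simp add: l_def K_def N_def field_simps)
    qed
  qed
  then show ?thesis
    using \<open>0 < r\<close> \<open>0 < l\<close> by blast
qed

lemma invertible_on_row_nonzero:
  assumes "invertible_on M H" "k \<in> M"
  obtains j where "j \<in> M" "H k j \<noteq> 0"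
proof -
  obtain B where "(\<Sum>j\<in>M. H k j * B j k) = 1"
    using assms unfolding invertible_on_def by fastforce
  then show ?thesis
    using that by (metis (no_types, lifting) mult_eq_0_iff sum.neutral zero_neq_one)
qed

lemma block_perturbation_constants_small:
  fixes S K N \<epsilon> :: real
  assumes "0 \<le> S" "1 \<le> K" "1 \<le> N" "\<epsilon> \<le> 1 / (4 * (S + 1))"
  defines "Q \<equiv> N * K + 2 * (S + 1) * N * K^2"
  shows "N * K < Q" and "S * (1 / (4 * (S + 1)) + \<epsilon> + K * (N * K / (Q - N * K))) < 1"
proof -
  show "N * K < Q"
    using assms(1-3) by (simp add: Q_def)
  have half: "K * (N * K / (Q - N * K)) = 1 / (2 * (S + 1))"
    using assms(1-3) by (simp add: Q_def power2_eq_square)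
  have split: "1 / (4 * t) + 1 / (4 * t) + 1 / (2 * t) = 1 / t" for t :: real
    by (cases "t = 0") (simp_all add: field_simps)
  have "1 / (4 * (S + 1)) + \<epsilon> + K * (N * K / (Q - N * K))
      \<le> 1 / (4 * (S + 1)) + 1 / (4 * (S + 1)) + 1 / (2 * (S + 1))"
    unfolding half using assms(4) by (intro add_mono add_left_mono) auto
  also have "\<dots> = 1 / (S + 1)"
    by (rule split)
  finally have "1 / (4 * (S + 1)) + \<epsilon> + K * (N * K / (Q - N * K)) \<le> 1 / (S + 1)" .
  then have "S * (1 / (4 * (S + 1)) + \<epsilon> + K * (N * K / (Q - N * K))) \<le> S * (1 / (S + 1))"
    using assms(1) by (rule mult_left_mono)
  also have "\<dots> < 1"
    using assms(1) by simp
  finally show "S * (1 / (4 * (S + 1)) + \<epsilon> + K * (N * K / (Q - N * K))) < 1" .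
qed

lemma unstable_hyperbolic_at_ND_near_mixed_NE:
  fixes x xs :: "real^'n::finite" and B :: "'n \<Rightarrow> 'n \<Rightarrow> real"
    and u :: "('n \<Rightarrow> bool) \<Rightarrow> real"
  defines "S \<equiv> \<Sum>l\<in>mixing_players xs. \<Sum>i\<in>mixing_players xs. \<bar>B l i\<bar>"
  assumes x: "x \<in> ND u lam" "0 < lam"
    and B: "\<And>l j. l \<in> mixing_players xs \<Longrightarrow> j \<in> mixing_players xs \<Longrightarrow>
      (\<Sum>i\<in>mixing_players xs. B l i * interaction u i j xs) = (if l = j then 1 else 0)"
    and "a \<in> mixing_players xs" "b \<in> mixing_players xs" "a \<noteq> b"
    and c: "c \<le> 1 / (4 * (S + 1))" "c \<le> \<bar>interaction u a b xs\<bar> / 2"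
    and close: "\<And>i j. \<bar>interaction u i j x - interaction u i j xs\<bar> \<le> c"
    and mixing: "\<And>i. i \<in> mixing_players xs \<Longrightarrow> lam \<le> c * (x $ i * (1 - x $ i))"
    and pure: "0 < \<delta>" "\<And>i. i \<notin> mixing_players xs \<Longrightarrow> \<delta> \<le> \<bar>gain u i x\<bar>"
      "4 * lam * (real CARD('n) * payoff_size u + 2 * (S + 1) * real CARD('n) * (payoff_size u)^2)
         \<le> \<delta>^2"
  shows "hyperbolic_pt (sbr_field u lam) x \<and> \<not> linearly_stable (sbr_field u lam) x"
proof -
  define M where "M = mixing_players xs"
  define Q where "Q = real CARD('n) * payoff_size u + 2 * (S + 1) * real CARD('n) * (payoff_size u)^2"
  define q where "q i = 1 / br_weight lam x i" for i
  have "0 \<le> S" "1 \<le> payoff_size u" "1 \<le> real CARD('n)"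
    using payoff_size_ge_one[of u] by (auto simp: S_def sum_nonneg)
  note constants = block_perturbation_constants_small[OF this c(1), folded Q_def]
  have q_on: "0 \<le> q i \<and> q i \<le> c" if "i \<in> M" for i
    using mixing[OF that[unfolded M_def]] ND_nth_strictly_between[OF x, of i] x(2)
    by (simp add: q_def br_weight_def pos_divide_le_eq)
  have "Q \<le> q i" if "i \<notin> M" for i
  proof -
    have "\<delta>^2 / (4 * lam) \<le> q i"
      unfolding q_def using pure(1,2) that by (intro inverse_br_weight_ge[OF x]) (auto simp: M_def)
    moreover have "Q \<le> \<delta>^2 / (4 * lam)"
      using pure(3) x(2) by (simp add: Q_def pos_le_divide_eq ac_simps)
    ultimately show ?thesis
      by linarith
  qed
  then have "v = 0" if "\<forall>i. (\<Sum>j\<in>UNIV. interaction u i j x * v $ j) = v $ i / br_weight lam x i" for v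
    using kernel_trivial_near_invertible_block[of M B "hessian_at u xs" "hessian_at u x" "payoff_size u"
        c q "1 / (4 * (S + 1))" Q v] B close q_on constants that c(1)
      abs_interaction_le_payoff_size[OF ND_subset_simplex_prod[OF x(1)]]
    unfolding S_def M_def q_def by (force simp: divide_inverse)
  moreover have "\<exists>v. v \<noteq> 0 \<and> weighted_sq_norm (br_weight lam x) v \<le> quad_form (hessian_at u x) v"
  proof (intro exists_quad_form_ge_on_two_axes[OF \<open>a \<noteq> b\<close>])
    have "q a \<le> c" "q b \<le> c"
      using q_on \<open>a \<in> mixing_players xs\<close> \<open>b \<in> mixing_players xs\<close> by (auto simp: M_def)
    then have "q a + q b \<le> \<bar>interaction u a b xs\<bar>"
      using c(2) by linarith
    also have "\<dots> \<le> 2 * \<bar>interaction u a b x\<bar>"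
      using close[of a b] c(2) by arith
    finally show "1 / br_weight lam x a + 1 / br_weight lam x b \<le> 2 * \<bar>interaction u a b x\<bar>"
      by (simp add: q_def)
  qed (simp_all add: interaction_sym[of u a])
  ultimately show ?thesis
    using unstable_hyperbolic_at_ND[OF x] by blast
qed

lemma local_instability_at_mixed_NE:
  fixes xs :: "real^'n::finite"
  assumes reg: "regular_NE u xs" and mixed: "mixing_players xs \<noteq> {}"
  shows "\<exists>r>0. \<exists>l>0. \<forall>lam x. 0 < lam \<longrightarrow> lam < l \<longrightarrow> x \<in> ND u lam \<longrightarrow> dist x xs < r \<longrightarrow>
           hyperbolic_pt (sbr_field u lam) x \<and> \<not> linearly_stable (sbr_field u lam) x"
proof -
  define M where "M = mixing_players xs"
  have inv: "invertible_on M (hessian_at u xs)"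
    using reg unfolding regular_NE_def M_def by (simp add: hess_eq_interaction[abs_def])
  then obtain B where B: "\<And>l j. l \<in> M \<Longrightarrow> j \<in> M \<Longrightarrow>
      (\<Sum>i\<in>M. B l i * interaction u i j xs) = (if l = j then 1 else 0)"
    unfolding invertible_on_def by blast
  obtain i0 j0 where "i0 \<in> M" "j0 \<in> M" "interaction u i0 j0 xs \<noteq> 0"
    using mixed invertible_on_row_nonzero[OF inv] unfolding M_def by blast
  then have "i0 \<noteq> j0"
    by auto
  define S where "S = (\<Sum>l\<in>M. \<Sum>i\<in>M. \<bar>B l i\<bar>)"
  define c where "c = min (1 / (4 * (S + 1))) (\<bar>interaction u i0 j0 xs\<bar> / 2)"
  define Q where "Q = real CARD('n) * payoff_size u + 2 * (S + 1) * real CARD('n) * (payoff_size u)^2"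
  have "0 \<le> S"
    by (simp add: S_def sum_nonneg)
  then have "0 < c" "0 < Q"
    using \<open>interaction u i0 j0 xs \<noteq> 0\<close> payoff_size_ge_one[of u]
    by (auto simp: c_def Q_def add_pos_nonneg)
  obtain \<delta> c0 r where "0 < \<delta>" "0 < c0" "0 < r"
    and \<delta>: "\<And>i. i \<notin> M \<Longrightarrow> 2 * \<delta> \<le> \<bar>gain u i xs\<bar>"
    and gain_close: "\<And>x i. dist x xs < r \<Longrightarrow> \<bar>gain u i x - gain u i xs\<bar> < \<delta>"
    and c0: "\<And>x i. dist x xs < r \<Longrightarrow> i \<in> M \<Longrightarrow> c0 \<le> x $ i * (1 - x $ i)"
    and W_close: "\<And>x i j. dist x xs < r \<Longrightarrow> \<bar>interaction u i j x - interaction u i j xs\<bar> < c"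
    using near_regular_NE[OF reg \<open>0 < c\<close>] unfolding M_def by metis
  define l where "l = min (c * c0) (\<delta>^2 / (4 * Q))"
  have "0 < l"
    using \<open>0 < c\<close> \<open>0 < c0\<close> \<open>0 < \<delta>\<close> \<open>0 < Q\<close> by (simp add: l_def)
  have "hyperbolic_pt (sbr_field u lam) x \<and> \<not> linearly_stable (sbr_field u lam) x"
    if lam: "0 < lam" "lam < l" and x: "x \<in> ND u lam" "dist x xs < r" for lam x
  proof -
    have "lam \<le> c * (x $ i * (1 - x $ i))" if "i \<in> M" for i
    proof -
      have "lam \<le> c * c0"
        using lam(2) by (simp add: l_def)
      also have "\<dots> \<le> c * (x $ i * (1 - x $ i))"
        using c0[OF x(2) that] \<open>0 < c\<close> by (intro mult_left_mono) auto
      finally show ?thesis .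
    qed
    moreover have "\<delta> \<le> \<bar>gain u i x\<bar>" if "i \<notin> M" for i
      using \<delta>[OF that] gain_close[OF x(2), of i] by arith
    moreover have "4 * lam * Q \<le> \<delta>^2"
      using lam(2) \<open>0 < Q\<close> by (simp add: l_def pos_less_divide_eq ac_simps)
    ultimately show ?thesis
      using unstable_hyperbolic_at_ND_near_mixed_NE[where a = i0 and b = j0 and c = c and \<delta> = \<delta>
          and B = B and xs = xs, OF x(1) lam(1)] B \<open>i0 \<in> M\<close> \<open>j0 \<in> M\<close> \<open>i0 \<noteq> j0\<close> W_close[OF x(2)] \<open>0 < \<delta>\<close>
      unfolding M_def S_def Q_def c_def by (simp add: less_imp_le)
  qed
  then show ?thesis
    using \<open>0 < r\<close> \<open>0 < l\<close> by blast
qed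

section \<open>Branches of Nash distributions at pure equilibria\<close>

lemma continuous_on_fixed_points:
  fixes G :: "'p::metric_space \<Rightarrow> 'a::metric_space \<Rightarrow> 'a"
  assumes "c < 1"
    and contr: "\<And>\<mu> z z'. \<mu> \<in> I \<Longrightarrow> z \<in> C \<Longrightarrow> z' \<in> C \<Longrightarrow> dist (G \<mu> z) (G \<mu> z') \<le> c * dist z z'"
    and cont: "\<And>z. z \<in> C \<Longrightarrow> continuous_on I (\<lambda>\<mu>. G \<mu> z)"
    and fixed: "\<And>\<mu>. \<mu> \<in> I \<Longrightarrow> y \<mu> \<in> C \<and> G \<mu> (y \<mu>) = y \<mu>"
  shows "continuous_on I y"
  unfolding continuous_on_iff
proof (intro ballI allI impI)
  fix \<mu>0 assume "\<mu>0 \<in> I"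
  fix e :: real assume "0 < e"
  have "0 < e * (1 - c)"
    using \<open>0 < e\<close> \<open>c < 1\<close> by simp
  then obtain d where "0 < d"
    and d: "\<And>\<mu>. \<mu> \<in> I \<Longrightarrow> dist \<mu> \<mu>0 < d \<Longrightarrow> dist (G \<mu> (y \<mu>0)) (G \<mu>0 (y \<mu>0)) < e * (1 - c)"
    using cont[of "y \<mu>0"] fixed[OF \<open>\<mu>0 \<in> I\<close>] \<open>\<mu>0 \<in> I\<close> unfolding continuous_on_iff by metis
  have "dist (y \<mu>) (y \<mu>0) < e" if "\<mu> \<in> I" "dist \<mu> \<mu>0 < d" for \<mu>
  proof -
    have "dist (y \<mu>) (y \<mu>0) = dist (G \<mu> (y \<mu>)) (G \<mu>0 (y \<mu>0))"
      using fixed[OF that(1)] fixed[OF \<open>\<mu>0 \<in> I\<close>] by simp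
    also have "\<dots> \<le> dist (G \<mu> (y \<mu>)) (G \<mu> (y \<mu>0)) + dist (G \<mu> (y \<mu>0)) (G \<mu>0 (y \<mu>0))"
      by (rule dist_triangle)
    also have "\<dots> < c * dist (y \<mu>) (y \<mu>0) + e * (1 - c)"
    proof (rule add_le_less_mono)
      show "dist (G \<mu> (y \<mu>)) (G \<mu> (y \<mu>0)) \<le> c * dist (y \<mu>) (y \<mu>0)"
        using contr[OF that(1)] fixed[OF that(1)] fixed[OF \<open>\<mu>0 \<in> I\<close>] by blast
    qed (rule d[OF that])
    finally have "(1 - c) * dist (y \<mu>) (y \<mu>0) < (1 - c) * e"
      by (simp add: algebra_simps)
    then show ?thesis
      using \<open>c < 1\<close> by simp
  qed
  then show "\<exists>d>0. \<forall>\<mu>\<in>I. dist \<mu> \<mu>0 < d \<longrightarrow> dist (y \<mu>) (y \<mu>0) < e"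
    using \<open>0 < d\<close> by blast
qed

lemma convex_simplex_prod: "convex (simplex_prod :: (real^'n::finite) set)"
  unfolding simplex_prod_def convex_def
proof (intro ballI allI impI, safe)
  fix x y :: "real^'n" and a b :: real and i
  assume "\<forall>i. 0 \<le> x $ i \<and> x $ i \<le> 1" "\<forall>i. 0 \<le> y $ i \<and> y $ i \<le> 1" "0 \<le> a" "0 \<le> b" "a + b = 1"
  then show "0 \<le> (a *\<^sub>R x + b *\<^sub>R y) $ i" "(a *\<^sub>R x + b *\<^sub>R y) $ i \<le> 1"
    using convex_bound_le[of "x $ i" 1 "y $ i" a b] by auto
qed

lemma closed_simplex_prod: "closed (simplex_prod :: (real^'n::finite) set)"
proof -
  have eq: "simplex_prod = (\<Inter>i. {x::real^'n. 0 \<le> x $ i} \<inter> {x. x $ i \<le> 1})"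
    by (auto simp: simplex_prod_def)
  have "closed ({x::real^'n. 0 \<le> x $ i} \<inter> {x. x $ i \<le> 1})" for i
    by (intro closed_Int closed_Collect_le continuous_intros)
  then show ?thesis
    unfolding eq by (intro closed_INT) simp
qed

lemma gain_lipschitz_on_simplex_prod:
  fixes z z' :: "real^'n::finite"
  assumes "z \<in> simplex_prod" "z' \<in> simplex_prod"
  shows "\<bar>gain u i z - gain u i z'\<bar> \<le> payoff_size u * real CARD('n) * dist z z'"
proof -
  define f where "f t = gain u i (z' + t *\<^sub>R (z - z'))" for t :: real
  have seg: "z' + t *\<^sub>R (z - z') \<in> simplex_prod" if "t \<in> {0..1}" for t
    using convexD_alt[OF convex_simplex_prod assms(2,1), of t] that by (simp add: algebra_simps)
  have "(f has_derivative (\<lambda>h. \<Sum>j\<in>UNIV. interaction u i j (z' + t *\<^sub>R (z - z')) * (h *\<^sub>R (z - z')) $ j))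
      (at t within {0..1})" for t
    unfolding f_def
    by (rule has_derivative_compose[OF _ gain_has_derivative, unfolded o_def])
      (auto intro!: derivative_eq_intros)
  then obtain t where "t \<in> {0<..<1}"
    and mvt: "f 1 - f 0 = (\<Sum>j\<in>UNIV. interaction u i j (z' + t *\<^sub>R (z - z')) * (z - z') $ j)"
    using mvt_simple[OF zero_less_one] by force
  have "\<bar>gain u i z - gain u i z'\<bar> \<le> payoff_size u * (\<Sum>j\<in>UNIV. \<bar>(z - z') $ j\<bar>)"
    using mvt \<open>t \<in> {0<..<1}\<close> seg[of t]
    by (auto simp: f_def intro!: abs_sum_mult_le abs_interaction_le_payoff_size)
  also have "\<dots> \<le> payoff_size u * (real CARD('n) * dist z z')"
  proof (intro mult_left_mono)
    have "(\<Sum>j\<in>UNIV. \<bar>(z - z') $ j\<bar>) \<le> (\<Sum>j\<in>(UNIV::'n set). norm (z - z'))"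
      by (intro sum_mono component_le_norm_cart)
    then show "(\<Sum>j\<in>UNIV. \<bar>(z - z') $ j\<bar>) \<le> real CARD('n) * dist z z'"
      by (simp add: dist_norm)
  qed (use payoff_size_ge_one[of u] in simp)
  finally show ?thesis
    by (simp add: mult.assoc)
qed

lemma logitBR_nth_near_pure:
  assumes "0 < lam" "0 < \<delta>" "(b = 1 \<and> \<delta> \<le> gain u i z) \<or> (b = 0 \<and> gain u i z \<le> - \<delta>)"
  shows "\<bar>logitBR u lam z $ i - b\<bar> \<le> lam / \<delta>"
proof -
  define s where "s = gain u i z / lam"
  have response: "logitBR u lam z $ i = logistic s"
    using assms(1) by (simp add: logitBR_nth s_def)
  have bound: "exp (- (\<delta> / lam)) \<le> lam / \<delta>"
    using exp_minus_le_inverse[of "\<delta> / lam"] assms(1,2) by simp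
  from assms(3) show ?thesis
  proof
    assume b: "b = 1 \<and> \<delta> \<le> gain u i z"
    then have "\<delta> / lam \<le> s"
      using assms(1) by (simp add: s_def divide_right_mono)
    then have "1 - logistic s \<le> exp (- (\<delta> / lam))"
      using one_minus_logistic_le_exp[of s] assms(1,2) by (smt (verit) divide_pos_pos exp_le_cancel_iff)
    then show ?thesis
      using b bound response logistic_less_one[of s] by simp
  next
    assume b: "b = 0 \<and> gain u i z \<le> - \<delta>"
    then have "s \<le> - (\<delta> / lam)"
      using divide_right_mono[of "gain u i z" "- \<delta>" lam] assms(1) by (simp add: s_def)
    then have "logistic s \<le> exp (- (\<delta> / lam))"
      using logistic_le_exp[of s] assms(1,2) by (smt (verit) divide_pos_pos exp_le_cancel_iff)
    then show ?thesis
      using b bound response logistic_pos[of s] by simp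
  qed
qed

lemma logitBR_nth_lipschitz_near_pure:
  assumes "0 < lam" "0 < \<delta>"
    and "(\<delta> \<le> gain u i z \<and> \<delta> \<le> gain u i z') \<or> (gain u i z \<le> - \<delta> \<and> gain u i z' \<le> - \<delta>)"
  shows "\<bar>logitBR u lam z $ i - logitBR u lam z' $ i\<bar> \<le> 4 * lam / \<delta>^2 * \<bar>gain u i z - gain u i z'\<bar>"
proof -
  have "(\<delta> / lam \<le> gain u i z / lam \<and> \<delta> / lam \<le> gain u i z' / lam)
      \<or> (gain u i z / lam \<le> - (\<delta> / lam) \<and> gain u i z' / lam \<le> - (\<delta> / lam))"
    using assms(3) divide_right_mono[OF _ less_imp_le[OF assms(1)]] by (metis minus_divide_left)
  then have "\<bar>logitBR u lam z $ i - logitBR u lam z' $ i\<bar>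
      \<le> exp (- (\<delta> / lam)) * \<bar>gain u i z / lam - gain u i z' / lam\<bar>"
    using assms(1,2) by (simp add: logitBR_nth logistic_lipschitz_away_from_zero)
  also have "\<dots> = exp (- (\<delta> / lam)) / lam * \<bar>gain u i z - gain u i z'\<bar>"
    using assms(1) by (simp add: diff_divide_distrib[symmetric] abs_divide)
  also have "\<dots> \<le> 4 * lam / \<delta>^2 * \<bar>gain u i z - gain u i z'\<bar>"
  proof (intro mult_right_mono)
    have "exp (- (\<delta> / lam)) \<le> 4 / (\<delta> / lam)^2"
      using exp_minus_le_four_div_square[of "\<delta> / lam"] assms(1,2) by simp
    then show "exp (- (\<delta> / lam)) / lam \<le> 4 * lam / \<delta>^2"
      using assms(1,2) by (simp add: field_simps power2_eq_square)
  qed simp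
  finally show ?thesis .
qed

lemma logitBR_in_simplex_prod: "lam \<noteq> 0 \<Longrightarrow> logitBR u lam z \<in> simplex_prod"
  by (simp add: simplex_prod_def logitBR_nth less_imp_le[OF logistic_pos] less_imp_le[OF logistic_less_one])

lemma dist_le_card_mult:
  fixes x y :: "real^'n::finite"
  assumes "\<And>i. \<bar>x $ i - y $ i\<bar> \<le> c"
  shows "dist x y \<le> real CARD('n) * c"
proof -
  have "dist x y \<le> (\<Sum>i\<in>UNIV. \<bar>(x - y) $ i\<bar>)"
    unfolding dist_norm by (rule norm_le_l1_cart)
  also have "\<dots> \<le> (\<Sum>i\<in>(UNIV::'n set). c)"
    using assms by (intro sum_mono) simp
  finally show ?thesis
    by simp
qed

lemma gains_bounded_away_near_pure_NE:
  fixes xs :: "real^'n::finite"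
  assumes "regular_NE u xs" "pure_profile xs"
  obtains \<delta> r where "0 < \<delta>" "0 < r"
    and "\<And>z i. dist z xs < r \<Longrightarrow> (xs $ i = 1 \<and> \<delta> \<le> gain u i z) \<or> (xs $ i = 0 \<and> gain u i z \<le> - \<delta>)"
proof -
  have "mixing_players xs = {}"
    using assms(2) unfolding pure_profile_def mixing_players_def by (auto, metis less_irrefl)
  obtain \<delta> c0 r where "0 < \<delta>" "0 < r"
    and \<delta>: "\<And>i. 2 * \<delta> \<le> \<bar>gain u i xs\<bar>"
    and close: "\<And>x i. dist x xs < r \<Longrightarrow> \<bar>gain u i x - gain u i xs\<bar> < \<delta>"
    using near_regular_NE[OF assms(1) zero_less_one] \<open>mixing_players xs = {}\<close> by (metis empty_iff)
  have "(xs $ i = 1 \<and> \<delta> \<le> gain u i z) \<or> (xs $ i = 0 \<and> gain u i z \<le> - \<delta>)" if "dist z xs < r" for z i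
    using regular_NE_pure_coordinate[OF assms(1), of i] \<open>mixing_players xs = {}\<close> \<delta>[of i]
      close[OF that, of i]
    by auto
  with that \<open>0 < \<delta>\<close> \<open>0 < r\<close> show ?thesis
    by blast
qed

lemma dist_logitBR_le_near_pure:
  fixes xs z :: "real^'n::finite"
  assumes "0 < lam" "0 < \<delta>"
    and "\<And>i. (xs $ i = 1 \<and> \<delta> \<le> gain u i z) \<or> (xs $ i = 0 \<and> gain u i z \<le> - \<delta>)"
  shows "dist (logitBR u lam z) xs \<le> real CARD('n) * (lam / \<delta>)"
  using assms by (intro dist_le_card_mult logitBR_nth_near_pure)

lemma logitBR_lipschitz_near_pure:
  fixes z z' :: "real^'n::finite"
  assumes "0 < lam" "0 < \<delta>" "z \<in> simplex_prod" "z' \<in> simplex_prod"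
    and "\<And>i. (\<delta> \<le> gain u i z \<and> \<delta> \<le> gain u i z') \<or> (gain u i z \<le> - \<delta> \<and> gain u i z' \<le> - \<delta>)"
  shows "dist (logitBR u lam z) (logitBR u lam z')
    \<le> 4 * lam * payoff_size u * real CARD('n)^2 / \<delta>^2 * dist z z'"
proof -
  have "\<bar>logitBR u lam z $ i - logitBR u lam z' $ i\<bar>
      \<le> 4 * lam / \<delta>^2 * (payoff_size u * real CARD('n) * dist z z')" for i
  proof -
    have "\<bar>logitBR u lam z $ i - logitBR u lam z' $ i\<bar> \<le> 4 * lam / \<delta>^2 * \<bar>gain u i z - gain u i z'\<bar>"
      by (rule logitBR_nth_lipschitz_near_pure[OF assms(1,2,5)])
    also have "\<dots> \<le> 4 * lam / \<delta>^2 * (payoff_size u * real CARD('n) * dist z z')"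
      using gain_lipschitz_on_simplex_prod[OF assms(3,4)] assms(1) by (intro mult_left_mono) auto
    finally show ?thesis .
  qed
  then have "dist (logitBR u lam z) (logitBR u lam z')
      \<le> real CARD('n) * (4 * lam / \<delta>^2 * (payoff_size u * real CARD('n) * dist z z'))"
    by (rule dist_le_card_mult)
  then show ?thesis
    by (simp add: power2_eq_square mult_ac)
qed

text \<open>Near a pure regular equilibrium the gains keep their signs, so the logit response is flat
  there.\<close>

lemma logitBR_contraction_near_pure_NE:
  fixes xs :: "real^'n::finite"
  assumes "regular_NE u xs" "pure_profile xs"
  obtains \<rho> \<delta> l where "0 < \<rho>" "0 < \<delta>" "0 < l"
    and "\<And>lam z. 0 < lam \<Longrightarrow> z \<in> cball xs \<rho> \<inter> simplex_prod \<Longrightarrow>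
      dist (logitBR u lam z) xs \<le> real CARD('n) * (lam / \<delta>)"
    and "\<And>lam z. 0 < lam \<Longrightarrow> lam < l \<Longrightarrow> z \<in> cball xs \<rho> \<inter> simplex_prod \<Longrightarrow>
      logitBR u lam z \<in> cball xs \<rho> \<inter> simplex_prod"
    and "\<And>lam z z'. 0 < lam \<Longrightarrow> lam < l \<Longrightarrow> z \<in> cball xs \<rho> \<inter> simplex_prod \<Longrightarrow>
      z' \<in> cball xs \<rho> \<inter> simplex_prod \<Longrightarrow> dist (logitBR u lam z) (logitBR u lam z') \<le> 1/2 * dist z z'"
proof -
  obtain \<delta> r where "0 < \<delta>" "0 < r"
    and side: "\<And>z i. dist z xs < r \<Longrightarrow> (xs $ i = 1 \<and> \<delta> \<le> gain u i z) \<or> (xs $ i = 0 \<and> gain u i z \<le> - \<delta>)"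
    using gains_bounded_away_near_pure_NE[OF assms] by blast
  define \<rho> where "\<rho> = r / 2"
  define C where "C = cball xs \<rho> \<inter> simplex_prod"
  have side_C: "(xs $ i = 1 \<and> \<delta> \<le> gain u i z) \<or> (xs $ i = 0 \<and> gain u i z \<le> - \<delta>)" if "z \<in> C" for z i
    using side[of z i] that \<open>0 < r\<close> by (simp add: C_def \<rho>_def dist_commute)
  define K N where "K = payoff_size u" and "N = real CARD('n)"
  define l where "l = min (\<rho> * \<delta> / N) (\<delta>^2 / (8 * K * N^2))"
  have "1 \<le> K" "1 \<le> N" "0 < \<rho>"
    using payoff_size_ge_one[of u] \<open>0 < r\<close> by (auto simp: K_def N_def \<rho>_def)
  then have "0 < l"
    using \<open>0 < \<delta>\<close> by (simp add: l_def)
  have "logitBR u lam z \<in> C" if "0 < lam" "lam < l" "z \<in> C" for lam z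
  proof -
    have "N * (lam / \<delta>) \<le> \<rho>"
      using that(2) \<open>0 < \<delta>\<close> \<open>1 \<le> N\<close> by (simp add: l_def field_simps)
    then show ?thesis
      using dist_logitBR_le_near_pure[OF that(1) \<open>0 < \<delta>\<close> side_C[OF that(3)]]
        logitBR_in_simplex_prod[of lam u z] that(1)
      by (simp add: C_def N_def dist_commute)
  qed
  moreover have "dist (logitBR u lam z) (logitBR u lam z') \<le> 1/2 * dist z z'"
    if "0 < lam" "lam < l" "z \<in> C" "z' \<in> C" for lam z z'
  proof -
    have "(\<delta> \<le> gain u i z \<and> \<delta> \<le> gain u i z') \<or> (gain u i z \<le> - \<delta> \<and> gain u i z' \<le> - \<delta>)" for i
      using side_C[OF that(3), of i] side_C[OF that(4), of i] by auto
    then have "dist (logitBR u lam z) (logitBR u lam z') \<le> 4 * lam * K * N^2 / \<delta>^2 * dist z z'"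
      using that(3,4) unfolding K_def N_def C_def
      by (intro logitBR_lipschitz_near_pure[OF that(1) \<open>0 < \<delta>\<close>]) auto
    also have "\<dots> \<le> 1/2 * dist z z'"
    proof (rule mult_right_mono)
      have "lam \<le> \<delta>^2 / (8 * K * N^2)"
        using that(2) by (simp add: l_def)
      then show "4 * lam * K * N^2 / \<delta>^2 \<le> 1/2"
        using \<open>0 < \<delta>\<close> \<open>1 \<le> K\<close> \<open>1 \<le> N\<close> by (simp add: field_simps)
    qed simp
    finally show ?thesis .
  qed
  ultimately show ?thesis
    using that[OF \<open>0 < \<rho>\<close> \<open>0 < \<delta>\<close> \<open>0 < l\<close>] dist_logitBR_le_near_pure[OF _ \<open>0 < \<delta>\<close> side_C]
    unfolding C_def by blast
qed

lemma tendsto_at_right_zero_if_dist_le: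
  assumes "0 < l" and "\<And>mu. 0 < mu \<Longrightarrow> mu < l \<Longrightarrow> dist (y mu) a \<le> c * mu"
  shows "(y \<longlongrightarrow> a) (at_right (0::real))"
  unfolding tendsto_iff eventually_at_right_field
proof (intro allI impI)
  fix e :: real assume "0 < e"
  define b where "b = min l (e / (\<bar>c\<bar> + 1))"
  have "dist (y mu) a < e" if "0 < mu" "mu < b" for mu
  proof -
    have "dist (y mu) a \<le> (\<bar>c\<bar> + 1) * mu"
      using assms(2)[of mu] that by (simp add: b_def) (smt (verit) mult_right_mono abs_ge_self)
    also have "\<dots> < e"
      using that(2) by (simp add: b_def pos_less_divide_eq mult.commute)
    finally show ?thesis .
  qed
  moreover have "0 < b"
    using assms(1) \<open>0 < e\<close> by (simp add: b_def)
  ultimately show "\<exists>b>0. \<forall>mu>0. mu < b \<longrightarrow> dist (y mu) a < e"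
    by blast
qed

text \<open>The branch through a Nash distribution near a pure regular equilibrium is the family of
  fixed points of these contractions, which depends continuously on lam.\<close>

lemma pure_ND_near_pure_NE:
  fixes xs :: "real^'n::finite"
  assumes "regular_NE u xs" "pure_profile xs"
  shows "\<exists>r>0. \<exists>l>0. \<forall>lam x. 0 < lam \<longrightarrow> lam < l \<longrightarrow> x \<in> ND u lam \<longrightarrow> dist x xs < r \<longrightarrow>
           pure_ND u lam x"
proof -
  obtain \<rho> \<delta> l where "0 < \<rho>" "0 < \<delta>" "0 < l"
    and near: "\<And>lam z. 0 < lam \<Longrightarrow> z \<in> cball xs \<rho> \<inter> simplex_prod \<Longrightarrow>
      dist (logitBR u lam z) xs \<le> real CARD('n) * (lam / \<delta>)"
    and into: "\<And>lam z. 0 < lam \<Longrightarrow> lam < l \<Longrightarrow> z \<in> cball xs \<rho> \<inter> simplex_prod \<Longrightarrow>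
      logitBR u lam z \<in> cball xs \<rho> \<inter> simplex_prod"
    and contr: "\<And>lam z z'. 0 < lam \<Longrightarrow> lam < l \<Longrightarrow> z \<in> cball xs \<rho> \<inter> simplex_prod \<Longrightarrow>
      z' \<in> cball xs \<rho> \<inter> simplex_prod \<Longrightarrow> dist (logitBR u lam z) (logitBR u lam z') \<le> 1/2 * dist z z'"
    using logitBR_contraction_near_pure_NE[OF assms] by blast
  define C where "C = cball xs \<rho> \<inter> simplex_prod"
  have "complete C"
    by (simp add: C_def complete_eq_closed closed_Int closed_simplex_prod)
  have "xs \<in> C"
    using assms(1) \<open>0 < \<rho>\<close> NE_subset_simplex_prod[of xs u] by (simp add: C_def regular_NE_def)
  then have "C \<noteq> {}"
    by blast
  have ex1: "\<exists>!z\<in>C. logitBR u mu z = z" if "0 < mu" "mu < l" for mu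
    using into[OF that] contr[OF that] \<open>complete C\<close> \<open>C \<noteq> {}\<close>
    by (intro Banach_fix[of C "1/2"]) (auto simp: C_def)
  define y where "y mu = (THE z. z \<in> C \<and> logitBR u mu z = z)" for mu
  have fixed: "y mu \<in> C \<and> logitBR u mu (y mu) = y mu" if "0 < mu" "mu < l" for mu
    unfolding y_def using theI'[OF ex1[OF that]] .
  have unique: "z = y mu" if "0 < mu" "mu < l" "z \<in> C" "logitBR u mu z = z" for mu z
    using ex1[OF that(1,2)] fixed[OF that(1,2)] that(3,4) by blast
  have "pure_ND u lam x" if lam: "0 < lam" "lam < l" and x: "x \<in> ND u lam" "dist x xs < \<rho>" for lam x
  proof -
    have "y lam = x"
      using unique[OF lam, of x] x by (simp add: C_def ND_def dist_commute)
    moreover have "\<forall>mu\<in>{0<..lam}. y mu \<in> ND u mu"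
      using fixed lam by (auto simp: ND_def C_def)
    moreover have "continuous_on {0<..lam} y"
    proof (rule continuous_on_fixed_points[where c = "1/2" and G = "logitBR u" and C = C])
      show "continuous_on {0<..lam} (\<lambda>mu. logitBR u mu z)" for z
        by (rule continuous_on_subset[OF continuous_on_logitBR_parameter]) auto
    qed (use contr fixed lam in \<open>auto simp: C_def\<close>)
    moreover have "(y \<longlongrightarrow> xs) (at_right 0)"
    proof (rule tendsto_at_right_zero_if_dist_le[OF \<open>0 < l\<close>])
      show "dist (y mu) xs \<le> real CARD('n) / \<delta> * mu" if "0 < mu" "mu < l" for mu
      proof -
        have "y mu \<in> cball xs \<rho> \<inter> simplex_prod" "logitBR u mu (y mu) = y mu"
          using fixed[OF that] by (auto simp: C_def)
        then show ?thesis
          using near[OF that(1), of "y mu"] by simp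
      qed
    qed
    ultimately show ?thesis
      using assms unfolding pure_ND_def regular_NE_def by blast
  qed
  then show ?thesis
    using \<open>0 < \<rho>\<close> \<open>0 < l\<close> by blast
qed

section \<open>Nash distributions accumulate at equilibria\<close>

text \<open>The Nash gap sums, over the players, the gain available from a unilateral deviation; it
  vanishes exactly on the equilibria and is at most N lam on Nash distributions, so these
  accumulate only at equilibria as lam tends to 0.\<close>

definition nash_gap :: "(('n::finite \<Rightarrow> bool) \<Rightarrow> real) \<Rightarrow> real^'n \<Rightarrow> real" where
  "nash_gap u x = (\<Sum>i\<in>UNIV. max (gain u i x) 0 * (1 - x $ i) + max (- gain u i x) 0 * x $ i)"

lemma continuous_on_nash_gap: "continuous_on S (nash_gap u)"
  unfolding nash_gap_def by (intro continuous_intros)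

lemma nash_gap_term_nonneg:
  "x \<in> simplex_prod \<Longrightarrow> 0 \<le> max (gain u i x) 0 * (1 - x $ i) + max (- gain u i x) 0 * x $ i"
  by (auto simp: simplex_prod_def intro!: add_nonneg_nonneg mult_nonneg_nonneg)

lemma nash_gap_nonneg: "x \<in> simplex_prod \<Longrightarrow> 0 \<le> nash_gap u x"
  unfolding nash_gap_def by (intro sum_nonneg nash_gap_term_nonneg)

lemma NE_if_nash_gap_eq_zero:
  assumes x: "x \<in> simplex_prod" and "nash_gap u x = 0"
  shows "x \<in> NE u"
proof -
  have "max (gain u i x) 0 * (1 - x $ i) + max (- gain u i x) 0 * x $ i = 0" for i
    using assms nash_gap_term_nonneg[OF x] unfolding nash_gap_def
    by (subst (asm) sum_nonneg_eq_0_iff) auto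
  moreover have "0 \<le> x $ i" "x $ i \<le> 1" for i
    using x by (auto simp: simplex_prod_def)
  ultimately have gain_le: "t * gain u i x \<le> x $ i * gain u i x" if "t \<in> {0..1}" for i t
  proof (cases "gain u i x" "0 :: real" rule: linorder_cases)
    case less
    then have "x $ i = 0"
      using \<open>max (gain u i x) 0 * (1 - x $ i) + max (- gain u i x) 0 * x $ i = 0\<close> by simp
    then show ?thesis
      using less that by (simp add: mult_nonneg_nonpos)
  next
    case greater
    then have "x $ i = 1"
      using \<open>max (gain u i x) 0 * (1 - x $ i) + max (- gain u i x) 0 * x $ i = 0\<close> by simp
    then show ?thesis
      using greater that by simp
  qed simp
  have "mlext u (upd x i t) \<le> mlext u x" if "t \<in> {0..1}" for i t
    using gain_le[OF that, of i] mlext_upd_eq[of u x i t] mlext_upd_eq[of u x i "x $ i"] by simp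
  then show ?thesis
    using x by (simp add: NE_def)
qed

lemma nash_gap_le_at_ND:
  fixes x :: "real^'n::finite"
  assumes "x \<in> ND u lam" "0 < lam"
  shows "nash_gap u x \<le> real CARD('n) * lam"
proof -
  have "max (gain u i x) 0 * (1 - x $ i) + max (- gain u i x) 0 * x $ i \<le> lam" for i
  proof (cases "0 \<le> gain u i x")
    case True
    then show ?thesis
      using one_minus_logistic_mult_le[of "gain u i x / lam"] ND_nth[OF assms, of i] assms(2)
      by (simp add: field_simps)
  next
    case False
    then show ?thesis
      using one_minus_logistic_mult_le[of "- gain u i x / lam"] ND_nth[OF assms, of i] assms(2)
      by (simp add: logistic_minus field_simps)
  qed
  then have "nash_gap u x \<le> (\<Sum>i\<in>(UNIV::'n set). lam)"
    unfolding nash_gap_def by (intro sum_mono)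
  then show ?thesis
    by simp
qed

lemma compact_simplex_prod: "compact (simplex_prod :: (real^'n::finite) set)"
proof -
  have "norm x \<le> real CARD('n)" if "x \<in> simplex_prod" for x :: "real^'n"
    using dist_le_card_mult[of x 0 1] that by (auto simp: simplex_prod_def)
  then have "bounded (simplex_prod :: (real^'n) set)"
    unfolding bounded_iff by blast
  then show ?thesis
    using closed_simplex_prod by (simp add: compact_eq_bounded_closed)
qed

lemma compact_NE: "compact (NE u :: (real^'n::finite) set)"
proof -
  have "NE u = simplex_prod \<inter> (\<Inter>i. \<Inter>t\<in>{0..1}. {x::real^'n. mlext u (upd x i t) \<le> mlext u x})"
    by (auto simp: NE_def)
  moreover have "closed {x::real^'n. mlext u (upd x i t) \<le> mlext u x}" for i t
    by (intro closed_Collect_le continuous_intros)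
  ultimately show ?thesis
    by (simp add: compact_Int_closed compact_simplex_prod closed_INT)
qed

lemma ND_near_NE:
  fixes u :: "('n::finite \<Rightarrow> bool) \<Rightarrow> real"
  assumes "0 < \<rho>"
  shows "\<exists>l>0. \<forall>lam x. 0 < lam \<longrightarrow> lam < l \<longrightarrow> x \<in> ND u lam \<longrightarrow> (\<exists>z\<in>NE u. dist x z < \<rho>)"
proof -
  define far where "far = simplex_prod - (\<Union>z\<in>NE u. ball z \<rho>)"
  have near: "\<exists>z\<in>NE u. dist x z < \<rho>" if x: "x \<in> simplex_prod" "x \<notin> far" for x
  proof -
    obtain z where "z \<in> NE u" "x \<in> ball z \<rho>"
      using x unfolding far_def by blast
    then show ?thesis
      by (auto simp: dist_commute)
  qed
  show ?thesis
  proof (cases "far = {}")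
    case True
    then have "\<exists>z\<in>NE u. dist x z < \<rho>" if "x \<in> ND u lam" for lam x
      using near ND_subset_simplex_prod[OF that] by blast
    then show ?thesis
      using zero_less_one by blast
  next
    case False
    have "compact far"
      unfolding far_def by (intro compact_diff compact_simplex_prod open_UN ballI open_ball)
    then obtain k where "k \<in> far" and min: "\<And>y. y \<in> far \<Longrightarrow> nash_gap u k \<le> nash_gap u y"
      using continuous_attains_inf[OF _ False continuous_on_nash_gap] by blast
    have "k \<notin> NE u"
      using \<open>k \<in> far\<close> assms by (auto simp: far_def)
    then have "0 < nash_gap u k"
      using \<open>k \<in> far\<close> nash_gap_nonneg[of k u] NE_if_nash_gap_eq_zero[of k u]
      by (force simp: far_def)
    have "\<exists>z\<in>NE u. dist x z < \<rho>"
      if "0 < lam" "lam < nash_gap u k / real CARD('n)" "x \<in> ND u lam" for lam x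
    proof (rule near)
      show "x \<in> simplex_prod"
        by (rule ND_subset_simplex_prod[OF that(3)])
      have "nash_gap u x < nash_gap u k"
        using nash_gap_le_at_ND[OF that(3,1)] that(2) by (simp add: field_simps)
      then show "x \<notin> far"
        using min[of x] by linarith
    qed
    then show ?thesis
      using \<open>0 < nash_gap u k\<close> by (intro exI[of _ "nash_gap u k / real CARD('n)"]) auto
  qed
qed

section \<open>Classification of Nash distributions\<close>

definition ND_classified_near :: "(('n::finite \<Rightarrow> bool) \<Rightarrow> real) \<Rightarrow> real^'n \<Rightarrow> real \<Rightarrow> real \<Rightarrow> bool" where
  "ND_classified_near u z r l \<longleftrightarrow>
     (\<forall>lam x. 0 < lam \<longrightarrow> lam < l \<longrightarrow> x \<in> ND u lam \<longrightarrow> dist x z < r \<longrightarrow>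
        hyperbolic_pt (sbr_field u lam) x \<and>
        (linearly_stable (sbr_field u lam) x \<longleftrightarrow> pure_profile z) \<and>
        (pure_profile z \<longrightarrow> pure_ND u lam x))"

lemma ND_classified_near_mono:
  "ND_classified_near u z r l \<Longrightarrow> l' \<le> l \<Longrightarrow> ND_classified_near u z r l'"
  unfolding ND_classified_near_def by auto

lemma ND_classified_near_regular_NE:
  assumes "regular_NE u z"
  shows "\<exists>r>0. \<exists>l>0. ND_classified_near u z r l"
proof (cases "mixing_players z = {}")
  case True
  have "pure_profile z"
    using True regular_NE_pure_coordinate[OF assms] by (auto simp: pure_profile_def)
  obtain r1 l1 where "0 < r1" "0 < l1" and stable: "\<forall>lam x. 0 < lam \<longrightarrow> lam < l1 \<longrightarrow>
      x \<in> ND u lam \<longrightarrow> dist x z < r1 \<longrightarrow>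
      hyperbolic_pt (sbr_field u lam) x \<and> linearly_stable (sbr_field u lam) x"
    using local_stability_at_pure_NE[OF assms True] by blast
  obtain r2 l2 where "0 < r2" "0 < l2" and branch: "\<forall>lam x. 0 < lam \<longrightarrow> lam < l2 \<longrightarrow>
      x \<in> ND u lam \<longrightarrow> dist x z < r2 \<longrightarrow> pure_ND u lam x"
    using pure_ND_near_pure_NE[OF assms \<open>pure_profile z\<close>] by blast
  have "ND_classified_near u z (min r1 r2) (min l1 l2)"
    using stable branch \<open>pure_profile z\<close> by (simp add: ND_classified_near_def)
  then show ?thesis
    using \<open>0 < r1\<close> \<open>0 < r2\<close> \<open>0 < l1\<close> \<open>0 < l2\<close> by (metis min_less_iff_conj)
next
  case False
  then obtain i where "0 < z $ i" "z $ i < 1"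
    by (auto simp: mixing_players_def)
  have "\<not> pure_profile z"
  proof
    assume "pure_profile z"
    then have "z $ i = 0 \<or> z $ i = 1"
      by (simp add: pure_profile_def)
    with \<open>0 < z $ i\<close> \<open>z $ i < 1\<close> show False
      by auto
  qed
  with local_instability_at_mixed_NE[OF assms False] show ?thesis
    by (auto simp: ND_classified_near_def)
qed

lemma compact_finite_cover_uniform_radius:
  fixes K :: "'a::metric_space set"
  assumes "compact K" "\<And>z. z \<in> K \<Longrightarrow> 0 < R z"
  obtains F \<rho> where "finite F" "F \<subseteq> K" "0 < \<rho>"
    and "\<And>x z'. z' \<in> K \<Longrightarrow> dist x z' < \<rho> \<Longrightarrow> \<exists>z\<in>F. dist x z < R z"
proof -
  have "K \<subseteq> (\<Union>z\<in>K. ball z (R z / 2))"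
    using assms(2) by (auto intro!: bexI)
  from compactE_image[OF assms(1) _ this] obtain F where F: "F \<subseteq> K" "finite F"
    and cover: "K \<subseteq> (\<Union>z\<in>F. ball z (R z / 2))"
    by blast
  define \<rho> where "\<rho> = Min (insert 1 ((\<lambda>z. R z / 2) ` F))"
  have "0 < \<rho>"
    using F assms(2) by (auto simp: \<rho>_def Min_gr_iff)
  have \<rho>: "\<rho> \<le> R z / 2" if "z \<in> F" for z
    unfolding \<rho>_def using F(2) that by (intro Min_le) auto
  have "\<exists>z\<in>F. dist x z < R z" if z': "z' \<in> K" "dist x z' < \<rho>" for x z'
  proof -
    obtain z where "z \<in> F" "z' \<in> ball z (R z / 2)"
      using cover z'(1) by blast
    then have "dist x z < R z"
      using dist_triangle[of x z z'] z'(2) \<rho>[of z] by (simp add: dist_commute)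
    with \<open>z \<in> F\<close> show ?thesis
      by blast
  qed
  with F \<open>0 < \<rho>\<close> that show ?thesis
    by blast
qed

text \<open>By compactness of the set of equilibria, one lam0 works for all of them, and every
  Nash distribution below lam0 lies in one of the classified neighbourhoods.\<close>

lemma ND_classified_uniformly:
  assumes "regular_game u"
  shows "\<exists>lam0>0. \<forall>lam x. 0 < lam \<longrightarrow> lam < lam0 \<longrightarrow> x \<in> ND u lam \<longrightarrow>
           (\<exists>z r. dist x z < r \<and> ND_classified_near u z r lam0)"
proof -
  have "\<forall>z\<in>NE u. \<exists>rl. 0 < fst rl \<and> 0 < snd rl \<and> ND_classified_near u z (fst rl) (snd rl)"
    using assms ND_classified_near_regular_NE by (fastforce simp: regular_game_def)
  from bchoice[OF this] obtain f where
    f: "\<forall>z\<in>NE u. 0 < fst (f z) \<and> 0 < snd (f z) \<and> ND_classified_near u z (fst (f z)) (snd (f z))"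
    by blast
  define R L where "R z = fst (f z)" and "L z = snd (f z)" for z
  have RL: "\<And>z. z \<in> NE u \<Longrightarrow> 0 < R z \<and> 0 < L z \<and> ND_classified_near u z (R z) (L z)"
    using f by (simp add: R_def L_def)
  obtain F \<rho> where F: "finite F" "F \<subseteq> NE u" and "0 < \<rho>"
    and cover: "\<And>x z'. z' \<in> NE u \<Longrightarrow> dist x z' < \<rho> \<Longrightarrow> \<exists>z\<in>F. dist x z < R z"
    using compact_finite_cover_uniform_radius[OF compact_NE, of u R] RL by blast
  obtain l where "0 < l" and l: "\<forall>lam x. 0 < lam \<longrightarrow> lam < l \<longrightarrow> x \<in> ND u lam \<longrightarrow> (\<exists>z\<in>NE u. dist x z < \<rho>)"
    using ND_near_NE[OF \<open>0 < \<rho>\<close>] by blast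
  define lam0 where "lam0 = Min (insert l (L ` F))"
  have "0 < lam0"
    using F RL \<open>0 < l\<close> by (auto simp: lam0_def Min_gr_iff)
  have lam0_le: "lam0 \<le> L z" if "z \<in> F" for z
    unfolding lam0_def using F(1) that by (intro Min_le) auto
  have "lam0 \<le> l"
    unfolding lam0_def using F(1) by (intro Min_le) auto
  have "\<exists>z r. dist x z < r \<and> ND_classified_near u z r lam0"
    if lam: "0 < lam" "lam < lam0" and x: "x \<in> ND u lam" for lam x
  proof -
    obtain z' where "z' \<in> NE u" "dist x z' < \<rho>"
      using l lam x \<open>lam0 \<le> l\<close> by fastforce
    then obtain z where "z \<in> F" "dist x z < R z"
      using cover by blast
    moreover have "ND_classified_near u z (R z) lam0"
      using RL[of z] F(2) \<open>z \<in> F\<close> ND_classified_near_mono[OF _ lam0_le[OF \<open>z \<in> F\<close>]] by blast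
    ultimately show ?thesis
      by blast
  qed
  then show ?thesis
    using \<open>0 < lam0\<close> by blast
qed

text \<open>Along a branch of Nash distributions, stability is locally constant (each point sits in a
  classified neighbourhood), hence constant on the connected parameter interval; near 0 the
  branch enters the neighbourhood of its pure limit, where it is stable.\<close>

lemma linearly_stable_if_pure_ND:
  assumes reg: "regular_game u"
    and classified: "\<forall>lam x. 0 < lam \<longrightarrow> lam < lam0 \<longrightarrow> x \<in> ND u lam \<longrightarrow>
           (\<exists>z r. dist x z < r \<and> ND_classified_near u z r lam0)"
    and lam: "0 < lam" "lam < lam0" and "pure_ND u lam x"
  shows "linearly_stable (sbr_field u lam) x"
proof -
  obtain y xs where cont: "continuous_on {0<..lam} y" and y: "\<forall>mu\<in>{0<..lam}. y mu \<in> ND u mu"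
    and "y lam = x" and "xs \<in> NE u" "pure_profile xs" and lim: "(y \<longlongrightarrow> xs) (at_right 0)"
    using \<open>pure_ND u lam x\<close> unfolding pure_ND_def by blast
  define stable where "stable mu \<longleftrightarrow> linearly_stable (sbr_field u mu) (y mu)" for mu
  have "eventually (\<lambda>mu'. stable mu = stable mu') (at mu within {0<..lam})"
    if mu: "mu \<in> {0<..lam}" for mu
  proof -
    have "y mu \<in> ND u mu" "mu < lam0"
      using y mu lam by auto
    then obtain z r where "dist (y mu) z < r" and cl: "ND_classified_near u z r lam0"
      using classified mu by force
    moreover have "((\<lambda>mu'. dist (y mu') z) \<longlongrightarrow> dist (y mu) z) (at mu within {0<..lam})"
      using cont mu unfolding continuous_on_def by (intro tendsto_intros) auto
    ultimately have "eventually (\<lambda>mu'. dist (y mu') z < r) (at mu within {0<..lam})"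
      by (simp add: order_tendstoD(2))
    moreover have "stable mu' \<longleftrightarrow> pure_profile z"
      if "mu' \<in> {0<..lam}" "dist (y mu') z < r" for mu'
      using cl y that lam unfolding ND_classified_near_def stable_def by force
    ultimately show ?thesis
      using \<open>dist (y mu) z < r\<close> mu
      by (auto simp: eventually_at_filter elim: eventually_mono)
  qed
  then have stable_eq: "stable mu = stable lam" if "mu \<in> {0<..lam}" for mu
    using connected_local_const[of "{0<..lam}" mu lam stable] that lam by auto
  obtain r l where "0 < r" "0 < l" and cl: "ND_classified_near u xs r l"
    using ND_classified_near_regular_NE reg \<open>xs \<in> NE u\<close> by (meson regular_game_def)
  obtain b where "0 < b" and b: "\<And>mu. 0 < mu \<Longrightarrow> mu < b \<Longrightarrow> dist (y mu) xs < r"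
    using lim \<open>0 < r\<close> unfolding tendsto_iff eventually_at_right_field by blast
  define mu where "mu = min b (min l lam) / 2"
  have "stable mu"
    using cl b[of mu] y \<open>pure_profile xs\<close> \<open>0 < b\<close> \<open>0 < l\<close> lam
    unfolding ND_classified_near_def stable_def mu_def by auto
  then show ?thesis
    using stable_eq[of mu] \<open>y lam = x\<close> \<open>0 < b\<close> \<open>0 < l\<close> lam by (simp add: stable_def mu_def)
qed

text \<open>Every notion in the statement is defined from the potential u itself.\<close>

theorem proposition1:
  fixes util :: "'n::finite \<Rightarrow> ('n \<Rightarrow> bool) \<Rightarrow> real"
    and u :: "('n \<Rightarrow> bool) \<Rightarrow> real"
  assumes "potential_game util u"
    and "regular_game u"
  shows "\<exists>lam0>0. \<forall>lam. 0 < lam \<and> lam < lam0 \<longrightarrow>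
           (\<forall>x\<in>ND u lam. hyperbolic_pt (sbr_field u lam) x \<and>
              (linearly_stable (sbr_field u lam) x \<longleftrightarrow> pure_ND u lam x))"
proof -
  obtain lam0 where "0 < lam0" and classified: "\<forall>lam x. 0 < lam \<longrightarrow> lam < lam0 \<longrightarrow> x \<in> ND u lam \<longrightarrow>
      (\<exists>z r. dist x z < r \<and> ND_classified_near u z r lam0)"
    using ND_classified_uniformly[OF assms(2)] by blast
  have "hyperbolic_pt (sbr_field u lam) x \<and> (linearly_stable (sbr_field u lam) x \<longleftrightarrow> pure_ND u lam x)"
    if "0 < lam" "lam < lam0" "x \<in> ND u lam" for lam x
    using classified that linearly_stable_if_pure_ND[OF assms(2) classified that(1,2)]
    unfolding ND_classified_near_def by blast
  then show ?thesis
    using \<open>0 < lam0\<close> by blast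
qed

end
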